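(* Suppose Assumption 1 holds with $\alpha\in(0,1]$, and let $(f_t)_{t\in\mathbb N}$ be the online gradient descent iterates. If the step sizes satisfy $$\sum_{t=1}^\infty\eta_t=\infty\qquad\text{and}\qquad\lim_{t\to\infty}\eta_t^{\alpha}\sum_{k=1}^{t}\eta_k^2=0,$$ then $\lim_{t\to\infty}\mathbb E[\mathcal E(f_t)]-\mathcal E(f_H)=0$.
   Context: Setting: Let $\mathcal X\subset\mathbb R^d$, $\mathcal Y\subset\mathbb R$, $\mathcal Z=\mathcal X\times\mathcal Y$, and let $\rho$ be a Borel probability measure on $\mathcal Z$. Let $K:\mathcal X\times\mathcal X\to\mathbb R$ be a continuous, symmetric, positive semi-definite kernel with reproducing kernel Hilbert space $H_K$ (inner product $\langle\cdot,\cdot\rangle$, norm $\|\cdot\|$), $K_x:=K(x,\cdot)$, reproducing property $f(x)=\langle f,K_x\rangle$, and $\kappa:=\sup_{x\in\mathcal X}\sqrt{K(x,x)}<\infty$. Let $\phi:\mathcal Y\times\mathbb R\to[0,\infty)$ be a loss function, differentiable in its second argument, and write $\phi'(y,s)$ for its derivative with respect to $s$. The generalization error of $f:\mathcal X\to\mathbb R$ is $\mathcal E(f)=\int_{\mathcal Z}\phi(y,f(x))\,d\rho(x,y)$. It is assumed that a minimizer $f_H\in\arg\min_{f\in H_K}\mathcal E(f)$ exists and that $\max\{\sup_{y\in\mathcal Y}\phi(y,0),\ \sup_{(x,y)\in\mathcal Z}\phi(y,f_H(x))\}<\infty$. Let $z_t=(x_t,y_t)$, $t\in\mathbb N$, be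 i.i.d. samples from $\rho$, let $(\eta_t)_{t\in\mathbb N}$ be positive step sizes, and define the online gradient descent iterates by $f_1=0$ and $f_{t+1}=f_t-\eta_t\phi'(y_t,f_t(x_t))K_{x_t}$ for $t\in\mathbb N$ (so $f_t$ depends only on $z_1,\dots,z_{t-1}$). Assumption 1: for every $y\in\mathcal Y$, $\phi(y,\cdot)$ is convex and differentiable, and there are constants $\alpha\in(0,1]$, $L>0$ with $|\phi'(y,s)-\phi'(y,\tilde s)|\le L|s-\tilde s|^{\alpha}$ for all $s,\tilde s\in\mathbb R$, $y\in\mathcal Y$. *)

theory Defs
  imports "HOL-Probability.Probability"
begin

text \<open>The RKHS H_K is represented by a real Hilbert space 'h together with the
  feature map Phi (Phi x = K_x), where an element g of 'h is identified with the
  function x |-> inner g (Phi x) (reproducing property).\<close>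

definition eval_h :: "('x \<Rightarrow> 'h::real_inner) \<Rightarrow> 'h \<Rightarrow> 'x \<Rightarrow> real" where
  "eval_h Phi g x = inner g (Phi x)"

definition gen_err :: "('x \<times> real) measure \<Rightarrow> (real \<Rightarrow> real \<Rightarrow> real) \<Rightarrow> ('x \<Rightarrow> real) \<Rightarrow> ennreal" where
  "gen_err rho phi f = (\<integral>\<^sup>+ z. ennreal (phi (snd z) (f (fst z))) \<partial>rho)"

text \<open>Online gradient descent iterates, indexed from 1: ogd ... 1 = 0 and
  ogd ... (t+1) = ogd ... t - eta t * phi'(y_t, f_t(x_t)) K_{x_t} for t >= 1,
  where the sample sequence is omega, z_t = omega t. (ogd ... 0 = 0 is unused.)\<close>
fun ogd :: "(nat \<Rightarrow> real) \<Rightarrow> (real \<Rightarrow> real \<Rightarrow> real) \<Rightarrow> ('x \<Rightarrow> 'h::real_inner)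
             \<Rightarrow> (nat \<Rightarrow> 'x \<times> real) \<Rightarrow> nat \<Rightarrow> 'h" where
  "ogd eta dphi Phi \<omega> 0 = 0"
| "ogd eta dphi Phi \<omega> (Suc t) =
     (if t = 0 then 0
      else ogd eta dphi Phi \<omega> t
           - (eta t * dphi (snd (\<omega> t)) (inner (ogd eta dphi Phi \<omega> t) (Phi (fst (\<omega> t)))))
             *\<^sub>R Phi (fst (\<omega> t)))"

end

theory Submission
  imports Defs
begin

text \<open>The expected excess risk \<open>a\<^sub>t = E[gen_err f\<^sub>t] - gen_err f\<^sub>H\<close> and the expected
  squared distance \<open>D\<^sub>t = E \<parallel>f\<^sub>t - f\<^sub>H\<parallel>\<^sup>2\<close> obey
  \<open>D\<^sub>t\<^sub>+\<^sub>1 \<le> D\<^sub>t - 2 \<eta>\<^sub>t a\<^sub>t + C \<eta>\<^sub>t\<^sup>2 (1 + a\<^sub>t)\<close> and \<open>a\<^sub>t\<^sub>+\<^sub>1 \<le> a\<^sub>t + C \<eta>\<^sub>t\<^bsup>1+\<alpha>\<^esup> (1 + a\<^sub>t)\<close>.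
  Both follow from the descent inequality of a loss with \<open>\<alpha>\<close>-Hoelder derivative and from its
  self-bounding property \<open>\<bar>\<phi>'\<bar>\<^bsup>1+1/\<alpha>\<^esup> \<le> C \<phi>\<close>; the first also uses convexity, and in the second
  the first-order term is the negated squared norm of the risk gradient, because the
  sample \<open>z\<^sub>t\<close> is independent of \<open>f\<^sub>t\<close>. The first recursion lets \<open>\<Sum> \<eta>\<^sub>t a\<^sub>t\<close> grow only like
  \<open>\<Sum> \<eta>\<^sub>t\<^sup>2\<close>, the second limits how fast \<open>a\<^sub>t\<close> can rise; with \<open>\<Sum> \<eta>\<^sub>t = \<infinity>\<close> and
  \<open>\<eta>\<^sub>t\<^sup>\<alpha> \<Sum>\<^sub>k\<^sub>\<le>\<^sub>t \<eta>\<^sub>k\<^sup>2 \<rightarrow> 0\<close> this forces \<open>a\<^sub>t \<rightarrow> 0\<close>.\<close>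

section \<open>Nonnegative losses with Hoelder continuous derivative\<close>

definition self_bound_const :: "real \<Rightarrow> real \<Rightarrow> real" where
  "self_bound_const L \<alpha> = 2 * (2 * L) powr (1 / \<alpha>)"

lemma powr_le_one_plus_powr:
  fixes x :: real
  assumes "0 \<le> x" "0 \<le> p" "p \<le> q"
  shows "x powr p \<le> 1 + x powr q"
proof (cases "x \<le> 1")
  case True
  then show ?thesis using assms powr_le1[of p x] powr_ge_zero[of x q] by linarith
next
  case False
  then have "x powr p \<le> x powr q" using assms by (intro powr_mono) auto
  then show ?thesis by linarith
qed

lemma self_bound_const_pos: "0 < L \<Longrightarrow> 0 < self_bound_const L \<alpha>"
  by (simp add: self_bound_const_def)

locale holder_smooth_loss =
  fixes f f' :: "real \<Rightarrow> real" and L \<alpha> :: real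
  assumes nonneg: "0 \<le> f s"
    and has_deriv: "(f has_real_derivative f' s) (at s)"
    and holder: "\<bar>f' s - f' s'\<bar> \<le> L * \<bar>s - s'\<bar> powr \<alpha>"
    and alpha_pos: "0 < \<alpha>" and alpha_le_1: "\<alpha> \<le> 1" and L_pos: "0 < L"
begin

lemma mean_value: "\<exists>\<xi>. \<bar>\<xi> - u\<bar> \<le> \<bar>v - u\<bar> \<and> f v - f u = (v - u) * f' \<xi>"
proof (cases u v rule: linorder_cases)
  case less
  then obtain \<xi> where "u < \<xi>" "\<xi> < v" "f v - f u = (v - u) * f' \<xi>"
    using MVT2[of u v f f'] has_deriv by blast
  then show ?thesis by (intro exI[of _ \<xi>]) auto
next
  case greater
  then obtain \<xi> where "v < \<xi>" "\<xi> < u" "f u - f v = (u - v) * f' \<xi>"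
    using MVT2[of v u f f'] has_deriv by blast
  then show ?thesis by (intro exI[of _ \<xi>]) (auto simp: algebra_simps)
qed auto

lemma descent: "f v \<le> f u + f' u * (v - u) + L * \<bar>v - u\<bar> powr (1 + \<alpha>)"
proof -
  obtain \<xi> where \<xi>: "\<bar>\<xi> - u\<bar> \<le> \<bar>v - u\<bar>" "f v - f u = (v - u) * f' \<xi>"
    using mean_value by blast
  have "(v - u) * (f' \<xi> - f' u) \<le> \<bar>v - u\<bar> * \<bar>f' \<xi> - f' u\<bar>"
    by (simp add: abs_mult[symmetric])
  also have "\<dots> \<le> \<bar>v - u\<bar> * (L * \<bar>v - u\<bar> powr \<alpha>)"
    using holder[of \<xi> u] powr_mono2[OF _ _ \<xi>(1), of \<alpha>] alpha_pos L_pos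
    by (intro mult_left_mono) (auto intro: order_trans)
  also have "\<dots> = L * \<bar>v - u\<bar> powr (1 + \<alpha>)"
    by (cases "v = u") (auto simp: powr_add)
  finally show ?thesis
    using \<xi>(2) by (simp add: algebra_simps)
qed

text \<open>Stepping from \<open>s\<close> against the gradient by \<open>h = (\<bar>f' s\<bar> / (2 L)) powr (1 / \<alpha>)\<close>
  decreases \<open>f\<close> by at least \<open>h \<bar>f' s\<bar> / 2\<close>, and \<open>f \<ge> 0\<close>.\<close>
lemma self_bounding: "\<bar>f' s\<bar> * (\<bar>f' s\<bar> / (2 * L)) powr (1 / \<alpha>) \<le> 2 * f s"
proof -
  define d where "d = \<bar>f' s\<bar>"
  define h where "h = (d / (2 * L)) powr (1 / \<alpha>)"
  define v where "v = s - sgn (f' s) * h"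
  have h0: "0 \<le> h" unfolding h_def by simp
  have hp: "L * h powr \<alpha> = d / 2"
    unfolding h_def using alpha_pos L_pos by (simp add: d_def powr_powr)
  have step: "\<bar>v - s\<bar> \<le> h"
    using h0 by (simp add: v_def abs_mult abs_sgn_eq)
  have "f' s * (v - s) = - h * d"
    by (simp add: v_def d_def abs_sgn mult.commute)
  moreover have "L * \<bar>v - s\<bar> powr (1 + \<alpha>) \<le> L * h powr (1 + \<alpha>)"
    using step alpha_pos L_pos by (intro mult_left_mono powr_mono2) auto
  moreover have "L * h powr (1 + \<alpha>) = h * d / 2"
    using hp h0 by (cases "h = 0") (auto simp: powr_add)
  ultimately have "f v \<le> f s - h * d / 2"
    using descent[of v s] by linarith
  then have "h * d \<le> 2 * f s"
    using nonneg[of v] by linarith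
  then show ?thesis unfolding h_def d_def by (simp add: mult.commute)
qed

lemma abs_deriv_powr_le:
  assumes "0 \<le> p" "p \<le> 1 + 1 / \<alpha>"
  shows "\<bar>f' s\<bar> powr p \<le> 1 + self_bound_const L \<alpha> * f s"
proof (cases "\<bar>f' s\<bar> \<le> 1")
  case True
  have "0 \<le> self_bound_const L \<alpha> * f s"
    using nonneg[of s] L_pos unfolding self_bound_const_def by simp
  moreover have "\<bar>f' s\<bar> powr p \<le> 1"
    using True assms(1) by (intro powr_le1) auto
  ultimately show ?thesis by linarith
next
  case False
  define d where "d = \<bar>f' s\<bar>"
  have d1: "1 < d" using False d_def by simp
  have "d powr p \<le> d powr (1 + 1 / \<alpha>)"
    using d1 assms by (intro powr_mono) auto
  also have "\<dots> = d * (d / (2 * L)) powr (1 / \<alpha>) * (2 * L) powr (1 / \<alpha>)"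
    using d1 L_pos by (simp add: powr_add powr_divide)
  also have "\<dots> \<le> 2 * f s * (2 * L) powr (1 / \<alpha>)"
    using self_bounding[of s] unfolding d_def by (intro mult_right_mono) auto
  finally have "d powr p \<le> self_bound_const L \<alpha> * f s"
    unfolding self_bound_const_def by (simp add: mult_ac)
  then show ?thesis unfolding d_def by simp
qed

lemma deriv_square_le: "(f' s)\<^sup>2 \<le> 1 + self_bound_const L \<alpha> * f s"
proof -
  have "2 \<le> 1 + 1 / \<alpha>"
    using alpha_pos alpha_le_1 by (simp add: field_simps)
  then have "\<bar>f' s\<bar> powr 2 \<le> 1 + self_bound_const L \<alpha> * f s"
    by (intro abs_deriv_powr_le) auto
  then show ?thesis by simp
qed

lemma abs_deriv_powr_one_plus_alpha_le:
  "\<bar>f' s\<bar> powr (1 + \<alpha>) \<le> 1 + self_bound_const L \<alpha> * f s"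
proof (rule abs_deriv_powr_le)
  have "\<alpha> * \<alpha> \<le> 1"
    using alpha_pos alpha_le_1 by (simp add: mult_le_one)
  then show "1 + \<alpha> \<le> 1 + 1 / \<alpha>"
    using alpha_pos by (simp add: field_simps)
qed (use alpha_pos in simp)

lemma abs_deriv_0_le: "\<bar>f' 0\<bar> \<le> 1 + self_bound_const L \<alpha> * f 0"
  using abs_deriv_powr_le[of 1 0] alpha_pos by simp

lemma abs_deriv_le: "\<bar>f' s\<bar> \<le> 1 + self_bound_const L \<alpha> * f 0 + L + L * \<bar>s\<bar>"
proof -
  have "\<bar>s\<bar> powr \<alpha> \<le> 1 + \<bar>s\<bar> powr 1"
    using alpha_pos alpha_le_1 by (intro powr_le_one_plus_powr) auto
  then have "L * \<bar>s\<bar> powr \<alpha> \<le> L * (1 + \<bar>s\<bar>)"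
    using L_pos by (intro mult_left_mono) auto
  then have "\<bar>f' s - f' 0\<bar> \<le> L * (1 + \<bar>s\<bar>)"
    using holder[of s 0] by simp
  then show ?thesis using abs_deriv_0_le by (simp add: algebra_simps)
qed

lemma le_quadratic: "f s \<le> f 0 + L + (1 + self_bound_const L \<alpha> * f 0) * \<bar>s\<bar> + L * s\<^sup>2"
proof -
  have "f' 0 * s \<le> \<bar>f' 0\<bar> * \<bar>s\<bar>"
    by (simp add: abs_mult[symmetric])
  also have "\<dots> \<le> (1 + self_bound_const L \<alpha> * f 0) * \<bar>s\<bar>"
    using abs_deriv_0_le by (intro mult_right_mono) auto
  finally have "f' 0 * s \<le> (1 + self_bound_const L \<alpha> * f 0) * \<bar>s\<bar>" .
  moreover have "\<bar>s\<bar> powr (1 + \<alpha>) \<le> 1 + \<bar>s\<bar> powr 2"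
    using alpha_pos alpha_le_1 by (intro powr_le_one_plus_powr) auto
  then have "L * \<bar>s\<bar> powr (1 + \<alpha>) \<le> L * (1 + s\<^sup>2)"
    using L_pos by (intro mult_left_mono) auto
  ultimately show ?thesis using descent[of s 0] by (simp add: algebra_simps)
qed

end
section \<open>Independent coordinates of a product of probability spaces\<close>

lemma integral_PiM_component:
  fixes f :: "'a \<Rightarrow> real"
  assumes M: "prob_space M" and f: "f \<in> borel_measurable M" and i: "i \<in> I"
  shows "(\<integral>\<omega>. f (\<omega> i) \<partial>PiM I (\<lambda>_. M)) = (\<integral>z. f z \<partial>M)"
proof -
  have "(\<integral>\<omega>. f (\<omega> i) \<partial>PiM I (\<lambda>_. M)) = (\<integral>z. f z \<partial>distr (PiM I (\<lambda>_. M)) M (\<lambda>\<omega>. \<omega> i))"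
    using i f by (intro integral_distr[symmetric]) auto
  also have "distr (PiM I (\<lambda>_. M)) M (\<lambda>\<omega>. \<omega> i) = M"
    using distr_PiM_component[of I "\<lambda>_. M" i] M i by simp
  finally show ?thesis .
qed

lemma (in prob_space) abs_integral_le_const:
  fixes f :: "'a \<Rightarrow> real"
  assumes "0 \<le> C" "\<And>x. x \<in> space M \<Longrightarrow> \<bar>f x\<bar> \<le> C"
  shows "\<bar>\<integral>x. f x \<partial>M\<bar> \<le> C"
proof -
  have "\<bar>\<integral>x. f x \<partial>M\<bar> \<le> (\<integral>x. \<bar>f x\<bar> \<partial>M)"
    using integral_norm_bound[of M f] by simp
  also have "\<dots> \<le> C"
  proof (cases "integrable M (\<lambda>x. \<bar>f x\<bar>)")
    case True
    then show ?thesis using assms(2) by (intro integral_le_const AE_I2) auto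
  qed (simp add: not_integrable_integral_eq assms(1))
  finally show ?thesis .
qed

lemma integral_PiM_fresh_coordinate:
  fixes M :: "'a measure" and h :: "('i \<Rightarrow> 'a) \<times> 'a \<Rightarrow> real" and j :: 'i
  assumes M: "prob_space M"
    and meas_minus: "h \<in> borel_measurable (PiM (UNIV - {j}) (\<lambda>_. M) \<Otimes>\<^sub>M M)"
    and meas: "h \<in> borel_measurable (PiM UNIV (\<lambda>_. M) \<Otimes>\<^sub>M M)"
    and bounded: "\<And>\<omega> z. (\<And>k. k \<noteq> j \<Longrightarrow> \<omega> k \<in> space M) \<Longrightarrow> z \<in> space M \<Longrightarrow> \<bar>h (\<omega>, z)\<bar> \<le> C"
    and indep: "\<And>\<omega> x z. h (fun_upd \<omega> j x, z) = h (\<omega>, z)"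
  shows "(\<integral>\<omega>. h (\<omega>, \<omega> j) \<partial>PiM UNIV (\<lambda>_. M)) = (\<integral>\<omega>. (\<integral>z. h (\<omega>, z) \<partial>M) \<partial>PiM UNIV (\<lambda>_. M))"
proof -
  interpret M: prob_space M by (rule M)
  interpret P: prob_space "PiM (UNIV - {j}) (\<lambda>_. M)" by (rule prob_space_PiM) (simp add: M)
  interpret MP: pair_prob_space M "PiM (UNIV - {j}) (\<lambda>_. M)" by unfold_locales
  let ?P = "PiM UNIV (\<lambda>_. M)" and ?Q = "M \<Otimes>\<^sub>M PiM (UNIV - {j}) (\<lambda>_. M)"
  let ?T = "\<lambda>w. (snd w)(j := fst w)"
  have UNIV_eq: "insert j (UNIV - {j}) = UNIV" "(UNIV - {j}) \<union> {j} = UNIV" by auto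
  have distr_T: "distr ?Q ?P ?T = ?P"
    using distr_pair_PiM_eq_PiM[of "UNIV - {j}" "\<lambda>_. M" j] M
    unfolding UNIV_eq by (simp add: case_prod_beta')
  have "?T \<in> measurable ?Q (PiM ((UNIV - {j}) \<union> {j}) (\<lambda>_. M))"
    by (rule measurable_fun_upd[OF refl measurable_snd measurable_fst])
  then have T_meas: "?T \<in> measurable ?Q ?P"
    unfolding UNIV_eq .
  have C_nonneg: "0 \<le> C"
    using bounded[of "\<lambda>_. SOME z. z \<in> space M" "SOME z. z \<in> space M"] M.not_empty
    by (metis (mono_tags) abs_ge_zero order_trans some_in_eq)
  have space_minus: "\<omega> k \<in> space M" if "\<omega> \<in> space (PiM (UNIV - {j}) (\<lambda>_. M))" "k \<noteq> j" for \<omega> k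
    using that by (auto simp: space_PiM PiE_iff)
  have space_Q: "fst w \<in> space M \<and> (\<forall>k. k \<noteq> j \<longrightarrow> snd w k \<in> space M)" if "w \<in> space ?Q" for w
    using that space_minus by (auto simp: space_pair_measure)
  have inner_meas_minus: "(\<lambda>\<omega>. \<integral>z. h (\<omega>, z) \<partial>M) \<in> borel_measurable (PiM (UNIV - {j}) (\<lambda>_. M))"
    and inner_meas: "(\<lambda>\<omega>. \<integral>z. h (\<omega>, z) \<partial>M) \<in> borel_measurable ?P"
    using meas_minus meas by (auto intro!: M.borel_measurable_lebesgue_integral simp: case_prod_beta')
  have int_h: "integrable ?Q (\<lambda>(x, y). h (y, x))"
  proof (rule MP.P.integrable_const_bound[where B=C])
    show "AE w in ?Q. norm ((\<lambda>(x, y). h (y, x)) w) \<le> C"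
    proof (rule AE_I2)
      fix w assume "w \<in> space ?Q"
      then show "norm ((\<lambda>(x, y). h (y, x)) w) \<le> C"
        using bounded[of "snd w" "fst w"] space_Q by (simp add: case_prod_beta')
    qed
    show "(\<lambda>(x, y). h (y, x)) \<in> borel_measurable ?Q"
      using measurable_compose[OF measurable_Pair[OF measurable_snd measurable_fst] meas_minus]
      by (simp add: case_prod_beta')
  qed
  have int_inner: "integrable ?Q (\<lambda>(x, y). \<integral>z. h (y, z) \<partial>M)"
  proof (rule MP.P.integrable_const_bound[where B=C])
    show "AE w in ?Q. norm ((\<lambda>(x, y). \<integral>z. h (y, z) \<partial>M) w) \<le> C"
      by (rule AE_I2) (auto simp: case_prod_beta' space_pair_measure space_minus bounded
          intro!: M.abs_integral_le_const C_nonneg)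
    show "(\<lambda>(x, y). \<integral>z. h (y, z) \<partial>M) \<in> borel_measurable ?Q"
      using measurable_compose[OF measurable_snd inner_meas_minus]
      by (simp add: case_prod_beta')
  qed
  have "(\<integral>\<omega>. h (\<omega>, \<omega> j) \<partial>?P) = (\<integral>w. h (?T w, fst w) \<partial>?Q)"
    using integral_distr[OF T_meas, of "\<lambda>\<omega>. h (\<omega>, \<omega> j)"] distr_T meas by simp
  also have "\<dots> = (\<integral>y. (\<integral>x. h (y, x) \<partial>M) \<partial>PiM (UNIV - {j}) (\<lambda>_. M))"
    using MP.integral_snd[OF int_h] by (simp add: indep case_prod_beta')
  also have "\<dots> = (\<integral>y. (\<integral>x. (\<integral>z. h (y, z) \<partial>M) \<partial>M) \<partial>PiM (UNIV - {j}) (\<lambda>_. M))"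
    by (simp add: M.prob_space)
  also have "\<dots> = (\<integral>w. (\<integral>z. h (?T w, z) \<partial>M) \<partial>?Q)"
    using MP.integral_snd[OF int_inner] by (simp add: indep case_prod_beta')
  also have "\<dots> = (\<integral>\<omega>. (\<integral>z. h (\<omega>, z) \<partial>M) \<partial>?P)"
    using integral_distr[OF T_meas inner_meas] distr_T by (simp add: case_prod_beta')
  finally show ?thesis .
qed

section \<open>Integrals of a feature kernel\<close>

lemma gram_sum_nonneg:
  fixes v :: "nat \<Rightarrow> 'a::real_inner"
  shows "0 \<le> (\<Sum>i<n. \<Sum>j<n. c i * c j * inner (v i) (v j))"
proof -
  have "(\<Sum>i<n. \<Sum>j<n. c i * c j * inner (v i) (v j))
      = inner (\<Sum>i<n. c i *\<^sub>R v i) (\<Sum>j<n. c j *\<^sub>R v j)"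
    by (simp add: inner_sum_left inner_sum_right sum_distrib_left mult_ac)
       (subst sum.swap, simp add: mult_ac)
  then show ?thesis by simp
qed

lemma nonneg_if_linear_quadratic_nonneg:
  fixes P Q :: real
  assumes "\<And>n::nat. 0 \<le> real n * P + (real n * real n - real n) * Q"
  shows "0 \<le> Q"
proof (rule ccontr)
  assume "\<not> 0 \<le> Q"
  define n where "n = nat \<lceil>\<bar>P\<bar> / (- Q)\<rceil> + 2"
  have n: "real n \<ge> \<bar>P\<bar> / (- Q) + 2" unfolding n_def by linarith
  with \<open>\<not> 0 \<le> Q\<close> have "\<bar>P\<bar> < (real n - 1) * (- Q)"
    by (smt (verit, best) divide_le_eq mult_le_cancel_right mult_minus_right)
  moreover have "0 \<le> real n * (P + (real n - 1) * Q)"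
    using assms[of n] by (simp add: algebra_simps)
  moreover have "0 < real n" using n \<open>\<not> 0 \<le> Q\<close> by (smt (verit) divide_nonneg_pos abs_ge_zero)
  ultimately show False
    by (smt (verit, best) abs_ge_self mult_minus_right zero_le_mult_iff)
qed

locale feature_kernel = prob_space M for M :: "'a measure" +
  fixes k :: "'a \<Rightarrow> 'a \<Rightarrow> real" and \<Psi> :: "'a \<Rightarrow> 'b::real_inner" and c :: real
  assumes feature: "\<And>z z'. z \<in> space M \<Longrightarrow> z' \<in> space M \<Longrightarrow> k z z' = inner (\<Psi> z) (\<Psi> z')"
    and kernel_measurable: "(\<lambda>w. k (fst w) (snd w)) \<in> borel_measurable (M \<Otimes>\<^sub>M M)"
    and kernel_bounded: "\<And>z z'. z \<in> space M \<Longrightarrow> z' \<in> space M \<Longrightarrow> \<bar>k z z'\<bar> \<le> c"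
begin

abbreviation samples :: "(nat \<Rightarrow> 'a) measure" where
  "samples \<equiv> PiM UNIV (\<lambda>_. M)"

lemma samples_prob_space: "prob_space samples"
  by (rule prob_space_PiM) (simp add: prob_space_axioms)

lemma kernel_measurable_compose:
  assumes "f \<in> measurable N M" "g \<in> measurable N M"
  shows "(\<lambda>x. k (f x) (g x)) \<in> borel_measurable N"
  using measurable_compose[OF measurable_Pair[OF assms] kernel_measurable] by simp

text \<open>For \<open>n\<close> independent samples, the expectation of
  \<open>\<parallel>\<Sum>i<n. a (\<omega> i) *\<^sub>R \<Psi> (\<omega> i)\<parallel>\<^sup>2 \<ge> 0\<close> is \<open>n P + (n\<^sup>2 - n) Q\<close>, where \<open>Q\<close> is the
  double integral; letting \<open>n\<close> grow forces \<open>Q \<ge> 0\<close>.\<close>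
lemma double_integral_kernel_nonneg:
  assumes a_meas: "a \<in> borel_measurable M" and a_bounded: "\<And>z. z \<in> space M \<Longrightarrow> \<bar>a z\<bar> \<le> A"
  shows "0 \<le> (\<integral>z'. a z' * (\<integral>z. a z * k z' z \<partial>M) \<partial>M)"
proof -
  interpret S: prob_space samples by (rule samples_prob_space)
  define \<psi> where "\<psi> z' = (\<integral>z. a z * k z' z \<partial>M)" for z'
  define Q where "Q = (\<integral>z'. a z' * \<psi> z' \<partial>M)"
  define P where "P = (\<integral>z. a z * a z * k z z \<partial>M)"
  let ?g = "\<lambda>i j \<omega>. a (\<omega> i) * a (\<omega> j) * k (\<omega> i) (\<omega> j)"
  have A_nonneg: "0 \<le> A" using a_bounded not_empty by (meson abs_ge_zero ex_in_conv order_trans)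
  have c_nonneg: "0 \<le> c" using kernel_bounded not_empty by (meson abs_ge_zero ex_in_conv order_trans)
  have prod_bounded: "\<bar>a z1 * a z2 * k z3 z4\<bar> \<le> A * A * c"
    if "z1 \<in> space M" "z2 \<in> space M" "z3 \<in> space M" "z4 \<in> space M" for z1 z2 z3 z4
    using that a_bounded kernel_bounded A_nonneg by (simp add: abs_mult mult_mono')
  have psi_meas: "\<psi> \<in> borel_measurable M"
    unfolding \<psi>_def
    using borel_measurable_times[OF measurable_compose[OF measurable_snd a_meas] kernel_measurable]
    by (intro borel_measurable_lebesgue_integral) (simp add: case_prod_beta')
  have psi_bounded: "\<bar>\<psi> z'\<bar> \<le> A * c" if "z' \<in> space M" for z'
    unfolding \<psi>_def using that a_bounded kernel_bounded A_nonneg c_nonneg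
    by (intro abs_integral_le_const) (auto simp: abs_mult intro!: mult_mono)
  have comp_meas: "(\<lambda>\<omega>. \<omega> i) \<in> measurable (PiM I (\<lambda>_. M)) M" if "i \<in> I" for i I
    using that by (rule measurable_component_singleton)
  have a_comp_meas: "(\<lambda>\<omega>. a (\<omega> i)) \<in> borel_measurable (PiM I (\<lambda>_. M))" if "i \<in> I" for i I
    using measurable_compose[OF comp_meas[OF that] a_meas] .
  have pair_meas: "?g i j \<in> borel_measurable samples" for i j
    by (intro borel_measurable_times kernel_measurable_compose comp_meas a_comp_meas) auto
  have pair_int: "integrable samples (?g i j)" for i j
    using pair_meas prod_bounded
    by (intro S.integrable_const_bound[where B="A * A * c"] AE_I2) (auto simp: space_PiM PiE_iff)
  have off_diagonal: "(\<integral>\<omega>. ?g i j \<omega> \<partial>samples) = Q" if "i \<noteq> j" for i j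
  proof -
    let ?h = "\<lambda>w. a (fst w i) * a (snd w) * k (fst w i) (snd w)"
    have h_meas: "?h \<in> borel_measurable (PiM I (\<lambda>_. M) \<Otimes>\<^sub>M M)" if "i \<in> I" for I
      using measurable_compose[OF measurable_compose[OF measurable_fst comp_meas[OF that]] a_meas]
        measurable_compose[OF measurable_snd a_meas]
      by (intro borel_measurable_times kernel_measurable_compose measurable_snd
          measurable_compose[OF measurable_fst comp_meas[OF that]]) auto
    have "(\<integral>\<omega>. ?h (\<omega>, \<omega> j) \<partial>samples) = (\<integral>\<omega>. (\<integral>z. ?h (\<omega>, z) \<partial>M) \<partial>samples)"
      using \<open>i \<noteq> j\<close> h_meas prod_bounded
      by (intro integral_PiM_fresh_coordinate[where C="A * A * c"] prob_space_axioms) auto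
    also have "\<dots> = (\<integral>\<omega>. a (\<omega> i) * \<psi> (\<omega> i) \<partial>samples)"
      by (simp add: \<psi>_def mult.assoc)
    also have "\<dots> = Q"
      unfolding Q_def using a_meas psi_meas
      by (intro integral_PiM_component prob_space_axioms borel_measurable_times) auto
    finally show ?thesis by simp
  qed
  have diagonal: "(\<integral>\<omega>. ?g i i \<omega> \<partial>samples) = P" for i
    unfolding P_def using a_meas
    by (intro integral_PiM_component[where f="\<lambda>z. a z * a z * k z z"] prob_space_axioms
        borel_measurable_times kernel_measurable_compose) auto
  have "0 \<le> real n * P + (real n * real n - real n) * Q" for n
  proof -
    have "0 \<le> (\<Sum>i<n. \<Sum>j<n. ?g i j \<omega>)" if "\<omega> \<in> space samples" for \<omega>
    proof -
      have "\<omega> i \<in> space M" for i using that by (auto simp: space_PiM)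
      then have "(\<Sum>i<n. \<Sum>j<n. ?g i j \<omega>)
          = (\<Sum>i<n. \<Sum>j<n. a (\<omega> i) * a (\<omega> j) * inner (\<Psi> (\<omega> i)) (\<Psi> (\<omega> j)))"
        by (simp add: feature)
      then show ?thesis by (simp add: gram_sum_nonneg)
    qed
    then have "0 \<le> (\<integral>\<omega>. (\<Sum>i<n. \<Sum>j<n. ?g i j \<omega>) \<partial>samples)"
      by (intro integral_nonneg_AE AE_I2)
    also have "\<dots> = (\<Sum>i<n. \<Sum>j<n. if i = j then P else Q)"
      using pair_int
      by (simp add: integrable_sum) (intro sum.cong refl, simp add: diagonal off_diagonal)
    also have "\<dots> = (\<Sum>i<n. P + (real n - 1) * Q)"
    proof (rule sum.cong[OF refl])
      fix i assume i: "i \<in> {..<n}"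
      have "(\<Sum>j<n. if i = j then P else Q) = P + (\<Sum>j\<in>{..<n} - {i}. if i = j then P else Q)"
        using sum.remove[of "{..<n}" i "\<lambda>j. if i = j then P else Q"] i by simp
      also have "(\<Sum>j\<in>{..<n} - {i}. if i = j then P else Q) = (\<Sum>j\<in>{..<n} - {i}. Q)"
        by (rule sum.cong) auto
      also have "\<dots> = (real n - 1) * Q"
        using i by (simp only: sum_constant card_Diff_singleton) (simp add: of_nat_diff)
      finally show "(\<Sum>j<n. if i = j then P else Q) = P + (real n - 1) * Q" .
    qed
    also have "\<dots> = real n * P + (real n * real n - real n) * Q"
      by (simp add: algebra_simps)
    finally show ?thesis .
  qed
  then show ?thesis
    unfolding Q_def \<psi>_def by (rule nonneg_if_linear_quadratic_nonneg)
qed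

end

section \<open>A pair of coupled recursions\<close>

lemma telescoping_le:
  fixes u b :: "nat \<Rightarrow> real"
  assumes "m \<le> n" "\<And>k. m \<le> k \<Longrightarrow> k < n \<Longrightarrow> u (Suc k) \<le> u k + b k"
  shows "u n \<le> u m + (\<Sum>k\<in>{m..<n}. b k)"
  using assms
proof (induction n rule: dec_induct)
  case (step n)
  then have "u (Suc n) \<le> u m + (\<Sum>k\<in>{m..<n}. b k) + b n" by force
  then show ?case using step(1) by simp
qed simp

locale descent_recursion =
  fixes a D \<eta> :: "nat \<Rightarrow> real" and \<alpha> C :: real
  assumes a_nonneg: "\<And>t. 1 \<le> t \<Longrightarrow> 0 \<le> a t"
    and D_nonneg: "\<And>t. 1 \<le> t \<Longrightarrow> 0 \<le> D t"
    and eta_pos: "\<And>t. 1 \<le> t \<Longrightarrow> 0 < \<eta> t"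
    and C_pos: "0 < C" and alpha_pos: "0 < \<alpha>"
    and D_step: "\<And>t. 1 \<le> t \<Longrightarrow> D (Suc t) \<le> D t - 2 * \<eta> t * a t + C * (\<eta> t)\<^sup>2 * (1 + a t)"
    and a_step: "\<And>t. 1 \<le> t \<Longrightarrow> a (Suc t) \<le> a t + C * \<eta> t powr (1 + \<alpha>) * (1 + a t)"
    and eta_sum_diverges: "filterlim (\<lambda>n. \<Sum>t=1..n. \<eta> t) at_top sequentially"
    and eta_powr_sq_sum: "(\<lambda>t. \<eta> t powr \<alpha> * (\<Sum>k=1..t. (\<eta> k)\<^sup>2)) \<longlonglongrightarrow> 0"
begin

definition sq_sum :: "nat \<Rightarrow> real" where
  "sq_sum n = (\<Sum>k\<in>{1..<n}. (\<eta> k)\<^sup>2)"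

lemma sq_sum_nonneg: "0 \<le> sq_sum n"
  unfolding sq_sum_def by (intro sum_nonneg) auto

lemma sq_sum_mono: "m \<le> n \<Longrightarrow> sq_sum m \<le> sq_sum n"
  unfolding sq_sum_def by (rule sum_mono2) auto

lemma sq_sum_split: "1 \<le> m \<Longrightarrow> m \<le> n \<Longrightarrow> sq_sum n = sq_sum m + (\<Sum>k\<in>{m..<n}. (\<eta> k)\<^sup>2)"
  unfolding sq_sum_def by (simp add: sum.atLeastLessThan_concat)

lemma sq_sum_Suc: "sq_sum (Suc t) = (\<Sum>k=1..t. (\<eta> k)\<^sup>2)"
  unfolding sq_sum_def by (simp add: atLeastLessThanSuc_atLeastAtMost)

lemma eta_powr_tendsto_0: "(\<lambda>t. \<eta> t powr \<alpha>) \<longlonglongrightarrow> 0"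
proof (rule tendsto_sandwich[where f="\<lambda>_. 0" and h="\<lambda>t. \<eta> t powr \<alpha> * (\<Sum>k=1..t. (\<eta> k)\<^sup>2) / (\<eta> 1)\<^sup>2"])
  have eta1: "0 < (\<eta> 1)\<^sup>2" using eta_pos[of 1] by simp
  have "\<eta> t powr \<alpha> \<le> \<eta> t powr \<alpha> * (\<Sum>k=1..t. (\<eta> k)\<^sup>2) / (\<eta> 1)\<^sup>2" if "1 \<le> t" for t
  proof -
    have "(\<eta> 1)\<^sup>2 \<le> (\<Sum>k=1..t. (\<eta> k)\<^sup>2)"
      using that by (intro member_le_sum) auto
    then have "\<eta> t powr \<alpha> * (\<eta> 1)\<^sup>2 \<le> \<eta> t powr \<alpha> * (\<Sum>k=1..t. (\<eta> k)\<^sup>2)"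
      by (intro mult_left_mono) auto
    then show ?thesis using eta1 by (simp add: field_simps)
  qed
  then show "eventually (\<lambda>t. \<eta> t powr \<alpha> \<le> \<eta> t powr \<alpha> * (\<Sum>k=1..t. (\<eta> k)\<^sup>2) / (\<eta> 1)\<^sup>2) sequentially"
    unfolding eventually_sequentially by blast
  show "(\<lambda>t. \<eta> t powr \<alpha> * (\<Sum>k=1..t. (\<eta> k)\<^sup>2) / (\<eta> 1)\<^sup>2) \<longlonglongrightarrow> 0"
    using tendsto_divide[OF eta_powr_sq_sum tendsto_const[of "(\<eta> 1)\<^sup>2"]] eta1 by simp
qed auto

lemma eventually_eta_le: "0 < \<delta> \<Longrightarrow> \<exists>N\<ge>1. \<forall>t\<ge>N. \<eta> t \<le> \<delta>"
proof -
  assume "0 < \<delta>"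
  then obtain N where N: "\<And>t. t \<ge> N \<Longrightarrow> \<eta> t powr \<alpha> < \<delta> powr \<alpha>"
    using order_tendstoD(2)[OF eta_powr_tendsto_0, of "\<delta> powr \<alpha>"] unfolding eventually_sequentially by auto
  have "\<eta> t \<le> \<delta>" if "t \<ge> N" for t
    using N[OF that] \<open>0 < \<delta>\<close> alpha_pos powr_mono2[of \<alpha> \<delta> "\<eta> t"] by (cases "\<eta> t \<le> \<delta>") auto
  then show ?thesis by (intro exI[of _ "max N 1"]) auto
qed

lemma eventually_eta_powr_sq_sum_le:
  assumes "0 < \<theta>" shows "\<exists>N. \<forall>t\<ge>N. \<eta> t powr \<alpha> * (1 + sq_sum (Suc t)) \<le> \<theta>"
proof -
  have "(\<lambda>t. \<eta> t powr \<alpha> + \<eta> t powr \<alpha> * (\<Sum>k=1..t. (\<eta> k)\<^sup>2)) \<longlonglongrightarrow> 0 + 0"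
    by (intro tendsto_add eta_powr_tendsto_0 eta_powr_sq_sum)
  then have "(\<lambda>t. \<eta> t powr \<alpha> * (1 + sq_sum (Suc t))) \<longlonglongrightarrow> 0"
    by (simp add: sq_sum_Suc algebra_simps)
  from order_tendstoD(2)[OF this assms] show ?thesis
    unfolding eventually_sequentially by (meson less_imp_le)
qed

text \<open>Once \<open>C \<eta> \<le> 1\<close>, the quadratic error term of \<open>D_step\<close> is absorbed by half of the descent.\<close>
lemma eventually_D_step:
  obtains t0 where "1 \<le> t0" "\<And>k. t0 \<le> k \<Longrightarrow> D (Suc k) \<le> D k - \<eta> k * a k + C * (\<eta> k)\<^sup>2"
proof -
  obtain t0 where t0: "1 \<le> t0" "\<And>t. t0 \<le> t \<Longrightarrow> \<eta> t \<le> 1 / C"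
    using eventually_eta_le[of "1 / C"] C_pos by auto
  have "D (Suc k) \<le> D k - \<eta> k * a k + C * (\<eta> k)\<^sup>2" if k: "t0 \<le> k" for k
  proof -
    have k1: "1 \<le> k" using k t0 by simp
    have "C * \<eta> k \<le> 1" using t0(2)[OF k] C_pos by (simp add: field_simps)
    then have "(C * \<eta> k) * (\<eta> k * a k) \<le> \<eta> k * a k"
      using eta_pos[OF k1] a_nonneg[OF k1] mult_right_mono[of "C * \<eta> k" 1 "\<eta> k * a k"] by simp
    then show ?thesis using D_step[OF k1] by (simp add: power2_eq_square algebra_simps)
  qed
  with t0(1) that show ?thesis by blast
qed

lemma weighted_sum_le:
  assumes t0: "1 \<le> t0" "\<And>k. t0 \<le> k \<Longrightarrow> D (Suc k) \<le> D k - \<eta> k * a k + C * (\<eta> k)\<^sup>2"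
    and mn: "t0 \<le> m" "m \<le> n"
  shows "(\<Sum>k\<in>{m..<n}. \<eta> k * a k) \<le> D t0 + C * sq_sum n"
proof -
  have terms_nonneg: "0 \<le> \<eta> k * a k" if "t0 \<le> k" for k
    using eta_pos[of k] a_nonneg[of k] that t0(1) by simp
  have "D n \<le> D t0 + (\<Sum>k\<in>{t0..<n}. C * (\<eta> k)\<^sup>2 - \<eta> k * a k)"
    using mn t0(2) by (intro telescoping_le) (auto simp: algebra_simps)
  then have "(\<Sum>k\<in>{t0..<n}. \<eta> k * a k) \<le> D t0 + C * (\<Sum>k\<in>{t0..<n}. (\<eta> k)\<^sup>2) - D n"
    by (simp add: sum_subtractf sum_distrib_left)
  moreover have "(\<Sum>k\<in>{m..<n}. \<eta> k * a k) \<le> (\<Sum>k\<in>{t0..<n}. \<eta> k * a k)"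
    using mn terms_nonneg by (intro sum_mono2) auto
  moreover have "(\<Sum>k\<in>{t0..<n}. (\<eta> k)\<^sup>2) \<le> sq_sum n"
    using sq_sum_split[of t0 n] sq_sum_nonneg[of t0] t0(1) mn by simp
  then have "C * (\<Sum>k\<in>{t0..<n}. (\<eta> k)\<^sup>2) \<le> C * sq_sum n"
    using C_pos by (intro mult_left_mono) auto
  moreover have "0 \<le> D n" using D_nonneg[of n] t0(1) mn by simp
  ultimately show ?thesis by linarith
qed

text \<open>The squared steps accrued inside the window are at most \<open>\<delta>\<close> times its total step size
  and are absorbed by the descent of \<open>D\<close>.\<close>
lemma window_weight_bound:
  assumes t0: "1 \<le> t0" "\<And>k. t0 \<le> k \<Longrightarrow> D (Suc k) \<le> D k - \<eta> k * a k + C * (\<eta> k)\<^sup>2"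
    and eps: "0 < \<epsilon>" "\<epsilon> \<le> 1"
    and delta: "4 * C * \<delta> \<le> \<epsilon>" "\<delta> \<le> 1" "\<And>k. j \<le> k \<Longrightarrow> \<eta> k \<le> \<delta>"
    and j: "t0 \<le> j" "j \<le> n"
    and above: "\<And>k. j < k \<Longrightarrow> k < n \<Longrightarrow> \<epsilon> / 2 \<le> a k"
  shows "\<epsilon> * (\<Sum>k\<in>{j..<n}. \<eta> k) \<le> (1 + 4 * D t0 + 4 * C) * (1 + sq_sum j)"
proof (cases "j = n")
  case True
  then show ?thesis using D_nonneg[OF t0(1)] C_pos sq_sum_nonneg[of j] by simp
next
  case False
  define w where "w = (\<Sum>k\<in>{Suc j..<n}. \<eta> k)"
  have j1: "1 \<le> j" using j t0 by simp
  have w_nonneg: "0 \<le> w"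
    unfolding w_def using eta_pos j1 by (intro sum_nonneg) (auto intro: less_imp_le)
  have "\<epsilon> / 2 * w = (\<Sum>k\<in>{Suc j..<n}. \<epsilon> / 2 * \<eta> k)"
    unfolding w_def by (rule sum_distrib_left)
  also have "\<dots> \<le> (\<Sum>k\<in>{Suc j..<n}. \<eta> k * a k)"
    using above eta_pos j1 by (intro sum_mono) (auto simp: mult.commute intro: mult_left_mono)
  also have "\<dots> \<le> D t0 + C * sq_sum n"
    using False j by (intro weighted_sum_le t0) auto
  finally have weighted: "\<epsilon> / 2 * w \<le> D t0 + C * sq_sum n" .
  have "(\<Sum>k\<in>{Suc j..<n}. (\<eta> k)\<^sup>2) \<le> (\<Sum>k\<in>{Suc j..<n}. \<delta> * \<eta> k)"
    using delta(3) eta_pos j1 by (intro sum_mono) (auto simp: power2_eq_square intro: mult_right_mono)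
  moreover have "(\<eta> j)\<^sup>2 \<le> 1"
    using delta(2) delta(3)[of j] eta_pos[OF j1] by (simp add: power_le_one abs_le_iff)
  ultimately have "sq_sum n \<le> sq_sum j + 1 + \<delta> * w"
    using sq_sum_split[of "Suc j" n] False j j1
    by (simp add: w_def sum_distrib_left sq_sum_def)
  then have "C * sq_sum n \<le> C * (sq_sum j + 1 + \<delta> * w)"
    using C_pos by (intro mult_left_mono) auto
  then have "C * sq_sum n \<le> C * (sq_sum j + 1) + C * \<delta> * w"
    by (simp add: algebra_simps)
  moreover have "4 * (C * \<delta> * w) \<le> \<epsilon> * w"
    using delta(1) w_nonneg mult_right_mono[of "4 * C * \<delta>" \<epsilon> w] by (simp add: mult.assoc)
  ultimately have "C * sq_sum n \<le> C * (sq_sum j + 1) + \<epsilon> / 4 * w"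
    by simp
  with weighted have "\<epsilon> * w \<le> 4 * D t0 + 4 * C * (1 + sq_sum j)"
    by (simp add: algebra_simps)
  moreover have "\<epsilon> * \<eta> j \<le> 1"
    using eps delta(2) delta(3)[of j] eta_pos[OF j1] by (simp add: mult_le_one)
  moreover have "(\<Sum>k\<in>{j..<n}. \<eta> k) = \<eta> j + w"
    unfolding w_def using False j by (simp add: sum.atLeast_Suc_lessThan)
  moreover have "0 \<le> (1 + 4 * D t0) * sq_sum j"
    using D_nonneg[OF t0(1)] sq_sum_nonneg by simp
  ultimately show ?thesis by (simp add: algebra_simps)
qed

lemma window_growth_bound:
  assumes j: "1 \<le> j" "j \<le> \<tau>"
    and small: "\<And>k. j \<le> k \<Longrightarrow> \<eta> k powr \<alpha> * (1 + sq_sum (Suc k)) \<le> \<theta>"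
    and below: "\<And>k. j \<le> k \<Longrightarrow> k < \<tau> \<Longrightarrow> a k \<le> 1"
  shows "a \<tau> \<le> a j + 2 * C * \<theta> / (1 + sq_sum j) * (\<Sum>k\<in>{j..<\<tau>}. \<eta> k)"
proof -
  have "a (Suc k) \<le> a k + 2 * C * \<theta> / (1 + sq_sum j) * \<eta> k" if k: "j \<le> k" "k < \<tau>" for k
  proof -
    have k1: "1 \<le> k" using j k by simp
    have "\<eta> k powr \<alpha> * (1 + sq_sum j) \<le> \<eta> k powr \<alpha> * (1 + sq_sum (Suc k))"
      using sq_sum_mono[of j "Suc k"] k by (intro mult_left_mono) auto
    then have "\<eta> k powr \<alpha> \<le> \<theta> / (1 + sq_sum j)"
      using small[OF k(1)] sq_sum_nonneg[of j] by (simp add: field_simps)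
    then have "\<eta> k * \<eta> k powr \<alpha> \<le> \<eta> k * (\<theta> / (1 + sq_sum j))"
      using eta_pos[OF k1] by (intro mult_left_mono) auto
    then have "\<eta> k powr (1 + \<alpha>) \<le> \<theta> / (1 + sq_sum j) * \<eta> k"
      using eta_pos[OF k1] by (simp add: powr_add mult.commute)
    moreover have "C * \<eta> k powr (1 + \<alpha>) * (1 + a k) \<le> C * \<eta> k powr (1 + \<alpha>) * 2"
      using below[OF k] C_pos by (intro mult_left_mono) auto
    moreover have "2 * C * \<eta> k powr (1 + \<alpha>) \<le> 2 * C * (\<theta> / (1 + sq_sum j) * \<eta> k)"
      using calculation(1) C_pos by (intro mult_left_mono) auto
    ultimately have "C * \<eta> k powr (1 + \<alpha>) * (1 + a k) \<le> 2 * C * (\<theta> / (1 + sq_sum j) * \<eta> k)"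
      by simp
    then show ?thesis using a_step[OF k1] by simp
  qed
  then have "a \<tau> \<le> a j + (\<Sum>k\<in>{j..<\<tau>}. 2 * C * \<theta> / (1 + sq_sum j) * \<eta> k)"
    using j by (intro telescoping_le) auto
  then show ?thesis by (simp add: sum_distrib_left)
qed

lemma frequently_below:
  assumes eps: "0 < \<epsilon>" "\<epsilon> \<le> 1"
  shows "\<exists>j\<ge>N. a j < \<epsilon> / 2"
proof (rule ccontr)
  assume "\<not> (\<exists>j\<ge>N. a j < \<epsilon> / 2)"
  then have above: "\<And>k. N \<le> k \<Longrightarrow> \<epsilon> / 2 \<le> a k" by force
  obtain t0 where t0: "1 \<le> t0" "\<And>k. t0 \<le> k \<Longrightarrow> D (Suc k) \<le> D k - \<eta> k * a k + C * (\<eta> k)\<^sup>2"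
    using eventually_D_step by blast
  define \<delta> where "\<delta> = min 1 (\<epsilon> / (4 * C))"
  have "\<delta> \<le> \<epsilon> / (4 * C)" unfolding \<delta>_def by simp
  then have "4 * C * \<delta> \<le> \<epsilon>" using C_pos by (simp add: field_simps)
  moreover have "0 < \<delta>" "\<delta> \<le> 1" using eps C_pos by (simp_all add: \<delta>_def)
  ultimately have delta: "0 < \<delta>" "\<delta> \<le> 1" "4 * C * \<delta> \<le> \<epsilon>" by auto
  obtain N1 where N1: "\<And>t. N1 \<le> t \<Longrightarrow> \<eta> t \<le> \<delta>"
    using eventually_eta_le[OF delta(1)] by auto
  define M where "M = max N (max N1 t0)"
  define B where "B = (\<Sum>t\<in>{1..<M}. \<eta> t) + (1 + 4 * D t0 + 4 * C) * (1 + sq_sum M) / \<epsilon>"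
  have "(\<Sum>t=1..n. \<eta> t) \<le> B" if "M \<le> n" for n
  proof -
    have "\<epsilon> * (\<Sum>k\<in>{M..<Suc n}. \<eta> k) \<le> (1 + 4 * D t0 + 4 * C) * (1 + sq_sum M)"
      using that above N1 delta by (intro window_weight_bound t0 eps) (auto simp: M_def)
    moreover have "(\<Sum>t=1..n. \<eta> t) = (\<Sum>t\<in>{1..<M}. \<eta> t) + (\<Sum>k\<in>{M..<Suc n}. \<eta> k)"
      using that t0(1) sum.atLeastLessThan_concat[of 1 M "Suc n" \<eta>]
      by (simp add: M_def atLeastLessThanSuc_atLeastAtMost)
    ultimately show ?thesis unfolding B_def using eps by (simp add: field_simps)
  qed
  moreover have "eventually (\<lambda>n. B + 1 \<le> (\<Sum>t=1..n. \<eta> t)) sequentially"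
    using eta_sum_diverges by (simp add: filterlim_at_top)
  then obtain n0 where "\<And>n. n0 \<le> n \<Longrightarrow> B + 1 \<le> (\<Sum>t=1..n. \<eta> t)"
    unfolding eventually_sequentially by blast
  ultimately show False
    using max.cobounded1[of n0 M] max.cobounded2[of M n0] by fastforce
qed

text \<open>If \<open>a\<close> kept exceeding \<open>\<epsilon>\<close>, there would be upcrossings from below \<open>\<epsilon> / 2\<close> to above
  \<open>\<epsilon>\<close> arbitrarily late; by \<open>window_growth_bound\<close> such an upcrossing needs total step size
  at least of order \<open>(1 + sq_sum j) / \<theta>\<close>, while \<open>window_weight_bound\<close> allows only order
  \<open>(1 + sq_sum j) / \<epsilon>\<close>.\<close>
lemma eventually_le:
  assumes eps: "0 < \<epsilon>" "\<epsilon> \<le> 1"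
  shows "\<exists>N. \<forall>t\<ge>N. a t \<le> \<epsilon>"
proof (rule ccontr)
  assume "\<not> (\<exists>N. \<forall>t\<ge>N. a t \<le> \<epsilon>)"
  then have exceeds: "\<And>N. \<exists>t\<ge>N. \<epsilon> < a t" by (meson not_le)
  obtain t0 where t0: "1 \<le> t0" "\<And>k. t0 \<le> k \<Longrightarrow> D (Suc k) \<le> D k - \<eta> k * a k + C * (\<eta> k)\<^sup>2"
    using eventually_D_step by blast
  define \<delta> where "\<delta> = min 1 (\<epsilon> / (4 * C))"
  have "\<delta> \<le> \<epsilon> / (4 * C)" unfolding \<delta>_def by simp
  then have "4 * C * \<delta> \<le> \<epsilon>" using C_pos by (simp add: field_simps)
  moreover have "0 < \<delta>" "\<delta> \<le> 1" using eps C_pos by (simp_all add: \<delta>_def)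
  ultimately have delta: "0 < \<delta>" "\<delta> \<le> 1" "4 * C * \<delta> \<le> \<epsilon>" by auto
  define K where "K = 1 + 4 * D t0 + 4 * C"
  have K_pos: "0 < K" unfolding K_def using D_nonneg[OF t0(1)] C_pos by simp
  define \<theta> where "\<theta> = \<epsilon>\<^sup>2 / (4 * C * K)"
  have \<theta>_pos: "0 < \<theta>" unfolding \<theta>_def using eps C_pos K_pos by simp
  obtain N1 where N1: "\<And>t. N1 \<le> t \<Longrightarrow> \<eta> t \<le> \<delta>"
    using eventually_eta_le[OF delta(1)] by auto
  obtain N2 where N2: "\<And>t. N2 \<le> t \<Longrightarrow> \<eta> t powr \<alpha> * (1 + sq_sum (Suc t)) \<le> \<theta>"
    using eventually_eta_powr_sq_sum_le[OF \<theta>_pos] by auto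
  obtain j0 where j0: "max t0 (max N1 N2) \<le> j0" "a j0 < \<epsilon> / 2"
    using frequently_below[OF eps] by blast
  obtain \<tau>0 where "Suc j0 \<le> \<tau>0" "\<epsilon> < a \<tau>0" using exceeds by blast
  define \<tau> where "\<tau> = (LEAST \<tau>. j0 < \<tau> \<and> \<epsilon> < a \<tau>)"
  have \<tau>: "j0 < \<tau>" "\<epsilon> < a \<tau>"
    unfolding \<tau>_def using LeastI[of "\<lambda>\<tau>. j0 < \<tau> \<and> \<epsilon> < a \<tau>" \<tau>0] \<open>Suc j0 \<le> \<tau>0\<close> \<open>\<epsilon> < a \<tau>0\<close> by auto
  have below_\<tau>: "a k \<le> \<epsilon>" if "j0 < k" "k < \<tau>" for k
    using not_less_Least[of k "\<lambda>\<tau>. j0 < \<tau> \<and> \<epsilon> < a \<tau>"] that unfolding \<tau>_def[symmetric] by auto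
  define j where "j = (GREATEST k. j0 \<le> k \<and> k < \<tau> \<and> a k < \<epsilon> / 2)"
  have "j0 \<le> j \<and> j < \<tau> \<and> a j < \<epsilon> / 2"
    unfolding j_def by (rule GreatestI_nat[of _ j0 \<tau>]) (use j0 \<tau> in auto)
  then have j: "j0 \<le> j" "j < \<tau>" "a j < \<epsilon> / 2" by auto
  have above_j: "\<epsilon> / 2 \<le> a k" if "j < k" "k < \<tau>" for k
  proof (rule ccontr)
    assume "\<not> \<epsilon> / 2 \<le> a k"
    then have "k \<le> j" unfolding j_def by (intro Greatest_le_nat[of _ k \<tau>]) (use that j in auto)
    then show False using that by simp
  qed
  have j_large: "t0 \<le> j" "N1 \<le> j" "N2 \<le> j" using j0(1) j(1) by simp_all
  define W where "W = (\<Sum>k\<in>{j..<\<tau>}. \<eta> k)"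
  define c where "c = 2 * C * \<theta> / (1 + sq_sum j)"
  have "\<epsilon> * W \<le> K * (1 + sq_sum j)"
    unfolding K_def W_def using j j_large N1 delta above_j
    by (intro window_weight_bound t0 eps) auto
  then have "c * W \<le> c * (K * (1 + sq_sum j) / \<epsilon>)"
    using eps C_pos \<theta>_pos sq_sum_nonneg[of j]
    by (intro mult_left_mono) (auto simp: c_def le_divide_eq mult.commute)
  moreover have "a \<tau> \<le> a j + c * W"
    unfolding c_def W_def
  proof (rule window_growth_bound)
    show "a k \<le> 1" if "j \<le> k" "k < \<tau>" for k
      using that j below_\<tau>[of k] eps by (cases "k = j") auto
    show "\<eta> k powr \<alpha> * (1 + sq_sum (Suc k)) \<le> \<theta>" if "j \<le> k" for k
      using N2[of k] j_large(3) that by simp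
    show "1 \<le> j" using j_large(1) t0(1) by simp
    show "j \<le> \<tau>" using j(2) by simp
  qed
  ultimately have "\<epsilon> / 2 < c * (K * (1 + sq_sum j) / \<epsilon>)"
    using \<tau>(2) j(3) by linarith
  also have "\<dots> = 2 * C * \<theta> * K / \<epsilon>"
  proof -
    have "0 < 1 + sq_sum j" using sq_sum_nonneg[of j] by linarith
    moreover have "2 * C * \<theta> / s * (K * s / \<epsilon>) = 2 * C * \<theta> * K / \<epsilon>" if "0 < s" for s
      using that by (simp add: field_simps)
    ultimately show ?thesis unfolding c_def by blast
  qed
  also have "\<dots> = \<epsilon> / 2"
    unfolding \<theta>_def using eps C_pos K_pos by (simp add: field_simps power2_eq_square)
  finally show False by simp
qed

lemma tendsto_0: "a \<longlonglongrightarrow> 0"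
proof (rule LIMSEQ_I)
  fix r :: real assume "0 < r"
  then obtain N where N: "\<And>t. N \<le> t \<Longrightarrow> a t \<le> min (r / 2) 1"
    using eventually_le[of "min (r / 2) 1"] by auto
  have "norm (a n - 0) < r" if "max N 1 \<le> n" for n
    using N[of n] a_nonneg[of n] that \<open>0 < r\<close> by auto
  then show "\<exists>no. \<forall>n\<ge>no. norm (a n - 0) < r" by blast
qed

end

section \<open>Online gradient descent in a reproducing kernel Hilbert space\<close>

locale kernel_ogd =
  fixes X :: "'x::euclidean_space set" and Y :: "real set"
    and rho :: "('x \<times> real) measure"
    and K :: "'x \<Rightarrow> 'x \<Rightarrow> real" and Phi :: "'x \<Rightarrow> 'h::real_inner"
    and phi dphi :: "real \<Rightarrow> real \<Rightarrow> real"
    and eta :: "nat \<Rightarrow> real" and \<alpha> L :: real and fH :: 'h and B \<kappa> :: real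
  assumes rho_prob: "prob_space rho"
    and rho_sets: "sets rho = sets (restrict_space borel (X \<times> Y))"
    and K_cont: "continuous_on (X \<times> X) (\<lambda>(x, x'). K x x')"
    and K_feature: "\<And>x x'. x \<in> X \<Longrightarrow> x' \<in> X \<Longrightarrow> K x x' = inner (Phi x) (Phi x')"
    and kappa: "\<And>x. x \<in> X \<Longrightarrow> sqrt (K x x) \<le> \<kappa>"
    and phi_nonneg: "\<And>y s. y \<in> Y \<Longrightarrow> 0 \<le> phi y s"
    and phi_meas: "(\<lambda>(y, s). phi y s) \<in> borel_measurable borel"
    and phi_deriv: "\<And>y s. y \<in> Y \<Longrightarrow> (phi y has_real_derivative dphi y s) (at s)"
    and phi_convex: "\<And>y. y \<in> Y \<Longrightarrow> convex_on UNIV (phi y)"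
    and alpha: "0 < \<alpha>" "\<alpha> \<le> 1" and L_pos: "0 < L"
    and holder: "\<And>y s s'. y \<in> Y \<Longrightarrow> \<bar>dphi y s - dphi y s'\<bar> \<le> L * \<bar>s - s'\<bar> powr \<alpha>"
    and fH_min: "\<And>g. gen_err rho phi (eval_h Phi fH) \<le> gen_err rho phi (eval_h Phi g)"
    and phi_0_le: "\<And>y. y \<in> Y \<Longrightarrow> phi y 0 \<le> B"
    and phi_fH_le: "\<And>x y. x \<in> X \<Longrightarrow> y \<in> Y \<Longrightarrow> phi y (eval_h Phi fH x) \<le> B"
    and eta_pos: "\<And>t. 1 \<le> t \<Longrightarrow> 0 < eta t"
    and eta_div: "filterlim (\<lambda>n. \<Sum>t=1..n. eta t) at_top sequentially"
    and eta_lim: "(\<lambda>t. eta t powr \<alpha> * (\<Sum>k=1..t. (eta k)\<^sup>2)) \<longlonglongrightarrow> 0"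
begin

interpretation rho: prob_space rho by (rule rho_prob)

lemma space_rho: "space rho = X \<times> Y"
  using sets_eq_imp_space_eq[OF rho_sets] by (simp add: space_restrict_space)

lemma norm_Phi_le: "x \<in> X \<Longrightarrow> norm (Phi x) \<le> \<kappa>"
  using kappa[of x] K_feature[of x x] by (simp add: power2_norm_eq_inner[symmetric])

lemma X_nonempty: "X \<noteq> {}"
  using rho.not_empty space_rho by auto

lemma kappa_nonneg: "0 \<le> \<kappa>"
proof -
  obtain x where "x \<in> X" using X_nonempty by blast
  then show ?thesis using norm_Phi_le[of x] norm_ge_zero[of "Phi x"] by linarith
qed

lemma abs_inner_Phi_le: "x \<in> X \<Longrightarrow> \<bar>inner g (Phi x)\<bar> \<le> norm g * \<kappa>"
  using Cauchy_Schwarz_ineq2[of g "Phi x"] mult_left_mono[OF norm_Phi_le[of x] norm_ge_zero[of g]]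
  by linarith

lemma abs_K_le: "x \<in> X \<Longrightarrow> x' \<in> X \<Longrightarrow> \<bar>K x x'\<bar> \<le> \<kappa>\<^sup>2"
proof -
  assume x: "x \<in> X" "x' \<in> X"
  have "norm (Phi x) * \<kappa> \<le> \<kappa> * \<kappa>"
    using norm_Phi_le[OF x(1)] kappa_nonneg by (intro mult_right_mono) auto
  then show ?thesis
    using abs_inner_Phi_le[OF x(2), of "Phi x"] x by (simp add: K_feature power2_eq_square)
qed

text \<open>The feature map is continuous because \<open>\<parallel>Phi x' - Phi x\<parallel>\<^sup>2 = K x' x' - 2 K x' x + K x x\<close>.\<close>
lemma continuous_on_Phi: "continuous_on X Phi"
  unfolding continuous_on_def
proof
  fix x assume x: "x \<in> X"
  have K_comp: "continuous_on X (\<lambda>x'. K (f x') (g x'))"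
    if "continuous_on X f" "continuous_on X g" "f ` X \<subseteq> X" "g ` X \<subseteq> X" for f g
    using continuous_on_compose2[OF K_cont continuous_on_Pair[OF that(1,2)]] that(3,4) by auto
  define d where "d x' = sqrt (K x' x' - 2 * K x' x + K x x)" for x'
  have "continuous_on X d"
    unfolding d_def using x by (intro continuous_intros K_comp) auto
  then have "(d \<longlongrightarrow> d x) (at x within X)"
    using x by (simp add: continuous_on_def)
  then have "(d \<longlongrightarrow> 0) (at x within X)"
    by (simp add: d_def)
  moreover have "d x' = dist (Phi x') (Phi x)" if "x' \<in> X" for x'
  proof -
    have "(dist (Phi x') (Phi x))\<^sup>2 = K x' x' - 2 * K x' x + K x x"
      using that x by (simp add: dist_norm power2_norm_eq_inner inner_diff_left inner_diff_right
          inner_commute[of "Phi x" "Phi x'"] K_feature)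
    then show ?thesis by (simp add: d_def flip: \<open>_ = K x' x' - 2 * K x' x + K x x\<close>)
  qed
  then have "eventually (\<lambda>x'. d x' = dist (Phi x') (Phi x)) (at x within X)"
    unfolding eventually_at_filter by (intro always_eventually) auto
  ultimately have "((\<lambda>x'. dist (Phi x') (Phi x)) \<longlongrightarrow> 0) (at x within X)"
    by (rule Lim_transform_eventually)
  then show "(Phi \<longlongrightarrow> Phi x) (at x within X)"
    by (rule tendsto_dist_iff[THEN iffD2])
qed

lemma loss_holder_smooth: "y \<in> Y \<Longrightarrow> holder_smooth_loss (phi y) (dphi y) L \<alpha>"
  by unfold_locales (use phi_nonneg phi_deriv holder alpha L_pos in auto)

lemma B_nonneg: "0 \<le> B"
  using phi_0_le phi_nonneg rho.not_empty space_rho by (fastforce intro: order_trans)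

lemma self_bound_phi_0_le: "y \<in> Y \<Longrightarrow> self_bound_const L \<alpha> * phi y 0 \<le> self_bound_const L \<alpha> * B"
  using phi_0_le self_bound_const_pos[OF L_pos, of \<alpha>] by (simp add: mult_left_mono)

lemma self_bound_pos: "0 < self_bound_const L \<alpha>"
  by (rule self_bound_const_pos[OF L_pos])

definition grad_const :: real where
  "grad_const = 1 + self_bound_const L \<alpha> * B + L"

lemma grad_const_pos: "0 < grad_const"
  unfolding grad_const_def
  using self_bound_const_pos[OF L_pos, of \<alpha>] B_nonneg L_pos by (simp add: add_pos_nonneg)

lemma abs_dphi_le: "y \<in> Y \<Longrightarrow> \<bar>dphi y s\<bar> \<le> grad_const + L * \<bar>s\<bar>"
  using holder_smooth_loss.abs_deriv_le[OF loss_holder_smooth, of y s] self_bound_phi_0_le[of y]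
  unfolding grad_const_def by simp

lemma phi_le: "y \<in> Y \<Longrightarrow> phi y s \<le> B + L + grad_const * \<bar>s\<bar> + L * s\<^sup>2"
proof -
  assume y: "y \<in> Y"
  have "1 + self_bound_const L \<alpha> * phi y 0 \<le> grad_const"
    using self_bound_phi_0_le[OF y] L_pos unfolding grad_const_def by simp
  then have "(1 + self_bound_const L \<alpha> * phi y 0) * \<bar>s\<bar> \<le> grad_const * \<bar>s\<bar>"
    by (intro mult_right_mono) auto
  then show ?thesis
    using holder_smooth_loss.le_quadratic[OF loss_holder_smooth[OF y], of s] phi_0_le[OF y] by simp
qed

lemma measurable_continuous_on_space:
  assumes "continuous_on (X \<times> Y) g"
  shows "g \<in> borel_measurable rho"
  using borel_measurable_continuous_on_restrict[OF assms] measurable_cong_sets[OF rho_sets refl] by blast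

lemma measurable_id_rho: "(\<lambda>z. z) \<in> measurable rho borel"
  using measurable_restrict_space1[OF measurable_id, of borel "X \<times> Y"] measurable_cong_sets[OF rho_sets refl]
  by blast

lemma measurable_continuous_on_space_pair:
  assumes "continuous_on ((X \<times> Y) \<times> (X \<times> Y)) g"
  shows "g \<in> borel_measurable (rho \<Otimes>\<^sub>M rho)"
proof -
  have "(\<lambda>w. w) \<in> measurable (rho \<Otimes>\<^sub>M rho) (restrict_space borel ((X \<times> Y) \<times> (X \<times> Y)))"
  proof (rule measurable_restrict_space2)
    show "(\<lambda>w. w) \<in> space (rho \<Otimes>\<^sub>M rho) \<rightarrow> (X \<times> Y) \<times> X \<times> Y"
      by (auto simp: space_pair_measure space_rho)
    have "(\<lambda>w. w) \<in> measurable (rho \<Otimes>\<^sub>M rho) (borel \<Otimes>\<^sub>M borel)"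
      using measurable_id_rho by (intro measurable_pair_iff[THEN iffD2]) auto
    then show "(\<lambda>w. w) \<in> measurable (rho \<Otimes>\<^sub>M rho) borel"
      by (simp add: borel_prod)
  qed
  from measurable_comp[OF this borel_measurable_continuous_on_restrict[OF assms]] show ?thesis
    by (simp add: comp_def)
qed

abbreviation samples :: "nat set \<Rightarrow> (nat \<Rightarrow> 'x \<times> real) measure" where
  "samples I \<equiv> PiM I (\<lambda>_. rho)"

definition iter :: "(nat \<Rightarrow> 'x \<times> real) \<Rightarrow> nat \<Rightarrow> 'h" where
  "iter \<omega> t = ogd eta dphi Phi \<omega> t"
definition pred :: "(nat \<Rightarrow> 'x \<times> real) \<Rightarrow> nat \<Rightarrow> 'x \<Rightarrow> real" where
  "pred \<omega> t x = inner (iter \<omega> t) (Phi x)"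
definition grad :: "(nat \<Rightarrow> 'x \<times> real) \<Rightarrow> nat \<Rightarrow> real" where
  "grad \<omega> t = dphi (snd (\<omega> t)) (pred \<omega> t (fst (\<omega> t)))"

lemma iter_0[simp]: "iter \<omega> 0 = 0" "iter \<omega> (Suc 0) = 0" by (simp_all add: iter_def)

lemma iter_Suc: "1 \<le> t \<Longrightarrow> iter \<omega> (Suc t) = iter \<omega> t - (eta t * grad \<omega> t) *\<^sub>R Phi (fst (\<omega> t))"
  by (simp add: iter_def grad_def pred_def)

lemma iter_cong: "(\<And>k. k < t \<Longrightarrow> \<omega> k = \<omega>' k) \<Longrightarrow> iter \<omega> t = iter \<omega>' t"
proof (induction t)
  case 0 then show ?case by simp
next
  case (Suc t)
  show ?case
  proof (cases "t = 0")
    case True then show ?thesis by simp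
  next
    case False
    have "iter \<omega> t = iter \<omega>' t" using Suc by auto
    moreover have "\<omega> t = \<omega>' t" using Suc by auto
    ultimately show ?thesis using False by (simp add: iter_Suc grad_def pred_def)
  qed
qed

lemma iter_fun_upd: "t \<le> j \<Longrightarrow> iter (fun_upd \<omega> j x) t = iter \<omega> t"
  by (rule iter_cong) auto

lemma pred_fun_upd: "t \<le> j \<Longrightarrow> pred (fun_upd \<omega> j x) t = pred \<omega> t"
  using iter_fun_upd by (simp add: pred_def fun_eq_iff)

lemma pred_Suc:
  assumes "1 \<le> t" "fst (\<omega> t) \<in> X" "x \<in> X"
  shows "pred \<omega> (Suc t) x = pred \<omega> t x - eta t * grad \<omega> t * K (fst (\<omega> t)) x"
  using assms by (simp add: pred_def iter_Suc inner_diff_left K_feature)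

fun norm_bound :: "nat \<Rightarrow> real" where
  "norm_bound 0 = 0"
| "norm_bound (Suc t) = norm_bound t + \<bar>eta t\<bar> * (grad_const + L * \<kappa> * norm_bound t) * \<kappa>"

lemma norm_bound_nonneg: "0 \<le> norm_bound t"
proof (induction t)
  case (Suc t)
  have "0 \<le> \<bar>eta t\<bar> * (grad_const + L * \<kappa> * norm_bound t) * \<kappa>"
    using Suc grad_const_pos L_pos kappa_nonneg by (intro mult_nonneg_nonneg add_nonneg_nonneg) auto
  then show ?case using Suc by simp
qed simp

lemma norm_iter_le: "(\<And>k. k < t \<Longrightarrow> \<omega> k \<in> X \<times> Y) \<Longrightarrow> norm (iter \<omega> t) \<le> norm_bound t"
proof (induction t)
  case 0 then show ?case by simp
next
  case (Suc t)
  show ?case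
  proof (cases "t = 0")
    case True then show ?thesis using norm_bound_nonneg[of "Suc 0"] by (simp del: norm_bound.simps)
  next
    case False
    have IH: "norm (iter \<omega> t) \<le> norm_bound t" using Suc by auto
    have wt: "fst (\<omega> t) \<in> X" "snd (\<omega> t) \<in> Y" using Suc.prems[of t] by (auto simp: mem_Times_iff)
    have evb: "\<bar>pred \<omega> t (fst (\<omega> t))\<bar> \<le> norm_bound t * \<kappa>"
      using abs_inner_Phi_le[OF wt(1), of "iter \<omega> t"] mult_right_mono[OF IH kappa_nonneg] unfolding pred_def
      by linarith
    have grb: "\<bar>grad \<omega> t\<bar> \<le> grad_const + L * \<kappa> * norm_bound t"
    proof -
      have "\<bar>grad \<omega> t\<bar> \<le> grad_const + L * \<bar>pred \<omega> t (fst (\<omega> t))\<bar>" unfolding grad_def by (rule abs_dphi_le[OF wt(2)])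
      also have "\<dots> \<le> grad_const + L * (norm_bound t * \<kappa>)" using evb L_pos by (intro add_left_mono mult_left_mono) auto
      finally show ?thesis by (simp add: mult_ac)
    qed
    have "norm (iter \<omega> (Suc t)) \<le> norm (iter \<omega> t) + norm ((eta t * grad \<omega> t) *\<^sub>R Phi (fst (\<omega> t)))"
      using False norm_triangle_ineq4[of "iter \<omega> t" "(eta t * grad \<omega> t) *\<^sub>R Phi (fst (\<omega> t))"] by (simp add: iter_Suc)
    also have "norm ((eta t * grad \<omega> t) *\<^sub>R Phi (fst (\<omega> t))) = \<bar>eta t\<bar> * \<bar>grad \<omega> t\<bar> * norm (Phi (fst (\<omega> t)))"
      by (simp add: abs_mult)
    also have "\<dots> \<le> \<bar>eta t\<bar> * (grad_const + L * \<kappa> * norm_bound t) * \<kappa>"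
      using grb norm_Phi_le[OF wt(1)] by (intro mult_mono mult_left_mono) auto
    finally show ?thesis using IH by simp
  qed
qed

lemma space_samples: "\<omega> \<in> space (samples I) \<Longrightarrow> k \<in> I \<Longrightarrow> \<omega> k \<in> X \<times> Y"
  by (auto simp: space_PiM PiE_iff space_rho)

lemma measurable_snd_rho: "(\<lambda>z. snd z) \<in> borel_measurable rho"
  by (rule measurable_continuous_on_space) (intro continuous_intros)

lemma loss_measurable: "(\<lambda>w. phi (snd (fst w)) (snd w)) \<in> borel_measurable (rho \<Otimes>\<^sub>M borel)"
proof -
  have 1: "(\<lambda>w. (snd (fst w), snd w)) \<in> measurable (rho \<Otimes>\<^sub>M (borel :: real measure)) borel"
    by (rule borel_measurable_Pair[OF measurable_compose[OF measurable_fst measurable_snd_rho] measurable_snd])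
  have "(\<lambda>w. (\<lambda>(y, s). phi y s) (snd (fst w), snd w)) \<in> borel_measurable (rho \<Otimes>\<^sub>M borel)"
    by (rule measurable_compose[OF 1 phi_meas])
  then show ?thesis by simp
qed

text \<open>\<open>dphi y\<close> is the pointwise limit of difference quotients of \<open>phi y\<close>.\<close>
lemma dloss_measurable: "(\<lambda>w. dphi (snd (fst w)) (snd w)) \<in> borel_measurable (rho \<Otimes>\<^sub>M borel)"
proof (rule borel_measurable_LIMSEQ_real)
  let ?u = "\<lambda>n w. (phi (snd (fst w)) (snd w + inverse (real (Suc n))) - phi (snd (fst w)) (snd w)) * real (Suc n)"
  show "?u n \<in> borel_measurable (rho \<Otimes>\<^sub>M borel)" for n
  proof -
    have a: "(\<lambda>w. (fst w, snd w + inverse (real (Suc n)))) \<in> measurable (rho \<Otimes>\<^sub>M borel) (rho \<Otimes>\<^sub>M borel)"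
      by (intro measurable_Pair measurable_fst borel_measurable_add measurable_snd measurable_const) auto
    have "(\<lambda>w. (\<lambda>w. phi (snd (fst w)) (snd w)) (fst w, snd w + inverse (real (Suc n)))) \<in> borel_measurable (rho \<Otimes>\<^sub>M borel)"
      by (rule measurable_compose[OF a loss_measurable])
    then have "(\<lambda>w. phi (snd (fst w)) (snd w + inverse (real (Suc n)))) \<in> borel_measurable (rho \<Otimes>\<^sub>M borel)" by simp
    then show ?thesis using loss_measurable by measurable
  qed
  fix w :: "('x \<times> real) \<times> real" assume w: "w \<in> space (rho \<Otimes>\<^sub>M borel)"
  then have y: "snd (fst w) \<in> Y" by (auto simp: space_pair_measure space_rho)
  define f where "f = phi (snd (fst w))"
  define x where "x = snd w"
  have D: "((\<lambda>h. (f (x + h) - f x) / h) \<longlongrightarrow> dphi (snd (fst w)) x) (at 0)"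
    using DERIV_D[OF phi_deriv[OF y]] unfolding f_def .
  have s: "filterlim (\<lambda>n. inverse (real (Suc n))) (at 0) sequentially"
    unfolding filterlim_at using LIMSEQ_inverse_real_of_nat by (auto simp del: of_nat_Suc)
  have "((\<lambda>n. (f (x + inverse (real (Suc n))) - f x) / inverse (real (Suc n))) \<longlongrightarrow> dphi (snd (fst w)) x) sequentially"
    by (rule filterlim_compose[OF D s])
  then show "(\<lambda>n. ?u n w) \<longlonglongrightarrow> dphi (snd (fst w)) (snd w)"
    unfolding f_def x_def by (simp add: divide_inverse)
qed

lemma kernel_measurable: "(\<lambda>w. K (fst (fst w)) (fst (snd w))) \<in> borel_measurable (rho \<Otimes>\<^sub>M rho)"
proof (rule measurable_continuous_on_space_pair)
  have "continuous_on ((X \<times> Y) \<times> (X \<times> Y)) ((\<lambda>(x, x'). K x x') \<circ> (\<lambda>w. (fst (fst w), fst (snd w))))"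
    by (rule continuous_on_compose[OF _ continuous_on_subset[OF K_cont]])
       (auto intro!: continuous_intros simp: mem_Times_iff)
  then show "continuous_on ((X \<times> Y) \<times> (X \<times> Y)) (\<lambda>w. K (fst (fst w)) (fst (snd w)))"
    by (simp add: comp_def)
qed

lemma fH_measurable: "(\<lambda>z. eval_h Phi fH (fst z)) \<in> borel_measurable rho"
proof (rule measurable_continuous_on_space)
  have "continuous_on (X \<times> Y) ((\<lambda>v. inner fH v) \<circ> Phi \<circ> fst)"
    by (intro continuous_on_compose continuous_intros continuous_on_subset[OF continuous_on_Phi]) auto
  then show "continuous_on (X \<times> Y) (\<lambda>z. eval_h Phi fH (fst z))" by (simp add: comp_def eval_h_def)
qed

lemma component_measurable: "k \<in> I \<Longrightarrow> (\<lambda>\<omega>. \<omega> k) \<in> measurable (samples I) rho"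
  by (rule measurable_component_singleton)

lemma pred_sample_measurable_of:
  assumes m: "(\<lambda>w. pred (fst w) t (fst (snd w))) \<in> borel_measurable (samples I \<Otimes>\<^sub>M rho)" and t: "t \<in> I"
  shows "(\<lambda>\<omega>. pred \<omega> t (fst (\<omega> t))) \<in> borel_measurable (samples I)"
proof -
  have "(\<lambda>\<omega>. (\<lambda>w. pred (fst w) t (fst (snd w))) (\<omega>, \<omega> t)) \<in> borel_measurable (samples I)"
    by (rule measurable_compose[OF measurable_Pair[OF measurable_ident_sets[OF refl] component_measurable[OF t]] m])
  then show ?thesis by simp
qed

lemma grad_measurable_of:
  assumes m: "(\<lambda>\<omega>. pred \<omega> t (fst (\<omega> t))) \<in> borel_measurable (samples I)" and t: "t \<in> I"
  shows "(\<lambda>\<omega>. grad \<omega> t) \<in> borel_measurable (samples I)"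
proof -
  have "(\<lambda>\<omega>. (\<lambda>w. dphi (snd (fst w)) (snd w)) (\<omega> t, pred \<omega> t (fst (\<omega> t)))) \<in> borel_measurable (samples I)"
    by (rule measurable_compose[OF measurable_Pair[OF component_measurable[OF t] m] dloss_measurable])
  then show ?thesis by (simp add: grad_def)
qed

lemma pred_measurable: "{..<t} \<subseteq> I \<Longrightarrow> (\<lambda>w. pred (fst w) t (fst (snd w))) \<in> borel_measurable (samples I \<Otimes>\<^sub>M rho)"
proof (induction t)
  case 0 then show ?case by (simp add: pred_def)
next
  case (Suc t)
  show ?case
  proof (cases "t = 0")
    case True then show ?thesis by (simp add: pred_def)
  next
    case False
    have tI: "t \<in> I" and sub: "{..<t} \<subseteq> I" using Suc.prems by auto
    have IH: "(\<lambda>w. pred (fst w) t (fst (snd w))) \<in> borel_measurable (samples I \<Otimes>\<^sub>M rho)" using Suc.IH sub .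
    have g: "(\<lambda>\<omega>. grad \<omega> t) \<in> borel_measurable (samples I)" by (rule grad_measurable_of[OF pred_sample_measurable_of[OF IH tI] tI])
    have k: "(\<lambda>w. (\<lambda>w. K (fst (fst w)) (fst (snd w))) (fst w t, snd w)) \<in> borel_measurable (samples I \<Otimes>\<^sub>M rho)"
      by (rule measurable_compose[OF measurable_Pair[OF measurable_compose[OF measurable_fst component_measurable[OF tI]] measurable_snd] kernel_measurable])
    have "(\<lambda>w. pred (fst w) t (fst (snd w)) - eta t * grad (fst w) t * K (fst (fst w t)) (fst (snd w))) \<in> borel_measurable (samples I \<Otimes>\<^sub>M rho)"
      using IH measurable_compose[OF measurable_fst g, of rho] k
      by (intro borel_measurable_diff borel_measurable_times borel_measurable_const) auto
    then show ?thesis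
    proof (rule measurable_cong[THEN iffD1, rotated])
      fix w assume w: "w \<in> space (samples I \<Otimes>\<^sub>M rho)"
      then have "fst w \<in> space (samples I)" "snd w \<in> space rho" by (auto simp: space_pair_measure)
      then have "fst (fst w t) \<in> X" "fst (snd w) \<in> X" using space_samples[OF _ tI] space_rho by (auto simp: mem_Times_iff)
      then show "pred (fst w) t (fst (snd w)) - eta t * grad (fst w) t * K (fst (fst w t)) (fst (snd w)) = pred (fst w) (Suc t) (fst (snd w))"
        using False by (simp add: pred_Suc)
    qed
  qed
qed

lemma grad_measurable: "t \<in> I \<Longrightarrow> {..<t} \<subseteq> I \<Longrightarrow> (\<lambda>\<omega>. grad \<omega> t) \<in> borel_measurable (samples I)"
  by (rule grad_measurable_of[OF pred_sample_measurable_of[OF pred_measurable]]) auto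

lemma pred_sample_measurable: "t \<in> I \<Longrightarrow> {..<t} \<subseteq> I \<Longrightarrow> (\<lambda>\<omega>. pred \<omega> t (fst (\<omega> t))) \<in> borel_measurable (samples I)"
  by (rule pred_sample_measurable_of[OF pred_measurable]) auto

lemma feature_kernel_rho: "feature_kernel rho (\<lambda>z z'. K (fst z) (fst z')) (\<lambda>z. Phi (fst z)) (\<kappa>\<^sup>2)"
proof unfold_locales
  show "(\<lambda>w. K (fst (fst w)) (fst (snd w))) \<in> borel_measurable (rho \<Otimes>\<^sub>M rho)"
    by (rule kernel_measurable)
  fix z z' assume "z \<in> space rho" "z' \<in> space rho"
  then have "fst z \<in> X" "fst z' \<in> X" by (auto simp: space_rho)
  then show "K (fst z) (fst z') = inner (Phi (fst z)) (Phi (fst z'))" "\<bar>K (fst z) (fst z')\<bar> \<le> \<kappa>\<^sup>2"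
    by (simp_all add: K_feature[symmetric] abs_K_le)
qed

lemma phi_above_tangent:
  assumes y: "y \<in> Y" shows "phi y u + dphi y u * (v - u) \<le> phi y v"
proof -
  have "dphi y u * (v - u) \<le> phi y v - phi y u"
    by (rule convex_on_imp_above_tangent[OF phi_convex[OF y]]) (use phi_deriv[OF y] in auto)
  then show ?thesis by simp
qed

definition risk :: "(nat \<Rightarrow> 'x \<times> real) \<Rightarrow> nat \<Rightarrow> real" where
  "risk \<omega> t = (\<integral>z. phi (snd z) (pred \<omega> t (fst z)) \<partial>rho)"
definition risk_H :: real where "risk_H = (\<integral>z. phi (snd z) (eval_h Phi fH (fst z)) \<partial>rho)"
definition exp_risk :: "nat \<Rightarrow> real" where "exp_risk t = (\<integral>\<omega>. risk \<omega> t \<partial>samples UNIV)"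
definition dist_sq :: "(nat \<Rightarrow> 'x \<times> real) \<Rightarrow> nat \<Rightarrow> real" where "dist_sq \<omega> t = (norm (iter \<omega> t - fH))\<^sup>2"
definition exp_dist_sq :: "nat \<Rightarrow> real" where "exp_dist_sq t = (\<integral>\<omega>. dist_sq \<omega> t \<partial>samples UNIV)"
definition loss_bound :: "nat \<Rightarrow> real" where "loss_bound t = B + L + grad_const * (norm_bound t * \<kappa>) + L * (norm_bound t * \<kappa>)\<^sup>2"
definition grad_bound :: "nat \<Rightarrow> real" where "grad_bound t = grad_const + L * (norm_bound t * \<kappa>)"

lemma space_samples_lessThan: "\<omega> \<in> space (samples I) \<Longrightarrow> {..<t} \<subseteq> I \<Longrightarrow> k < t \<Longrightarrow> \<omega> k \<in> X \<times> Y"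
  using space_samples by auto

lemma abs_pred_le: "(\<And>k. k < t \<Longrightarrow> \<omega> k \<in> X \<times> Y) \<Longrightarrow> x \<in> X \<Longrightarrow> \<bar>pred \<omega> t x\<bar> \<le> norm_bound t * \<kappa>"
  using abs_inner_Phi_le[of x "iter \<omega> t"] mult_right_mono[OF norm_iter_le[of t \<omega>] kappa_nonneg] unfolding pred_def by force

lemma phi_pred_bounds:
  assumes g: "\<And>k. k < t \<Longrightarrow> \<omega> k \<in> X \<times> Y" and z: "z \<in> X \<times> Y"
  shows "0 \<le> phi (snd z) (pred \<omega> t (fst z))" "phi (snd z) (pred \<omega> t (fst z)) \<le> loss_bound t"
proof -
  have y: "snd z \<in> Y" and x: "fst z \<in> X" using z by (auto simp: mem_Times_iff)
  show "0 \<le> phi (snd z) (pred \<omega> t (fst z))" using phi_nonneg[OF y] .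
  let ?s = "pred \<omega> t (fst z)"
  have sb: "\<bar>?s\<bar> \<le> norm_bound t * \<kappa>" by (rule abs_pred_le[OF g x])
  have "grad_const * \<bar>?s\<bar> \<le> grad_const * (norm_bound t * \<kappa>)" using sb grad_const_pos by (intro mult_left_mono) auto
  moreover have "?s\<^sup>2 \<le> (norm_bound t * \<kappa>)\<^sup>2"
    using sb by (metis abs_le_square_iff abs_of_nonneg mult_nonneg_nonneg norm_bound_nonneg kappa_nonneg)
  then have "L * ?s\<^sup>2 \<le> L * (norm_bound t * \<kappa>)\<^sup>2" using L_pos by (intro mult_left_mono) auto
  ultimately show "phi (snd z) ?s \<le> loss_bound t" using phi_le[OF y, of ?s] unfolding loss_bound_def by linarith
qed

lemma abs_dphi_pred_le:
  assumes g: "\<And>k. k < t \<Longrightarrow> \<omega> k \<in> X \<times> Y" and z: "z \<in> X \<times> Y"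
  shows "\<bar>dphi (snd z) (pred \<omega> t (fst z))\<bar> \<le> grad_bound t"
proof -
  have y: "snd z \<in> Y" and x: "fst z \<in> X" using z by (auto simp: mem_Times_iff)
  have "L * \<bar>pred \<omega> t (fst z)\<bar> \<le> L * (norm_bound t * \<kappa>)" using abs_pred_le[OF g x] L_pos by (intro mult_left_mono) auto
  then show ?thesis using abs_dphi_le[OF y, of "pred \<omega> t (fst z)"] unfolding grad_bound_def by linarith
qed

lemma grad_bound_nonneg: "0 \<le> grad_bound t" unfolding grad_bound_def using grad_const_pos L_pos norm_bound_nonneg kappa_nonneg by simp

lemma loss_pred_measurable: "{..<t} \<subseteq> I \<Longrightarrow> (\<lambda>w. phi (snd (snd w)) (pred (fst w) t (fst (snd w)))) \<in> borel_measurable (samples I \<Otimes>\<^sub>M rho)"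
proof -
  assume a: "{..<t} \<subseteq> I"
  have "(\<lambda>w. (\<lambda>w. phi (snd (fst w)) (snd w)) (snd w, pred (fst w) t (fst (snd w)))) \<in> borel_measurable (samples I \<Otimes>\<^sub>M rho)"
    by (rule measurable_compose[OF measurable_Pair[OF measurable_snd pred_measurable[OF a]] loss_measurable])
  then show ?thesis by simp
qed

lemma dloss_pred_measurable: "{..<t} \<subseteq> I \<Longrightarrow> (\<lambda>w. dphi (snd (snd w)) (pred (fst w) t (fst (snd w)))) \<in> borel_measurable (samples I \<Otimes>\<^sub>M rho)"
proof -
  assume a: "{..<t} \<subseteq> I"
  have "(\<lambda>w. (\<lambda>w. dphi (snd (fst w)) (snd w)) (snd w, pred (fst w) t (fst (snd w)))) \<in> borel_measurable (samples I \<Otimes>\<^sub>M rho)"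
    by (rule measurable_compose[OF measurable_Pair[OF measurable_snd pred_measurable[OF a]] dloss_measurable])
  then show ?thesis by simp
qed

lemma risk_measurable: "{..<t} \<subseteq> I \<Longrightarrow> (\<lambda>\<omega>. risk \<omega> t) \<in> borel_measurable (samples I)"
  unfolding risk_def using loss_pred_measurable
  by (intro sigma_finite_measure.borel_measurable_lebesgue_integral[OF prob_space_imp_sigma_finite[OF rho_prob]])
     (simp add: case_prod_beta')

lemma loss_pred_measurable_rho: "\<omega> \<in> space (samples I) \<Longrightarrow> {..<t} \<subseteq> I \<Longrightarrow> (\<lambda>z. phi (snd z) (pred \<omega> t (fst z))) \<in> borel_measurable rho"
  using measurable_Pair2[OF loss_pred_measurable] by simp

lemma risk_bounds: assumes "\<omega> \<in> space (samples I)" "{..<t} \<subseteq> I" shows "0 \<le> risk \<omega> t" "risk \<omega> t \<le> loss_bound t"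
proof -
  have g: "\<And>k. k < t \<Longrightarrow> \<omega> k \<in> X \<times> Y" using space_samples_lessThan[OF assms] .
  have i: "integrable rho (\<lambda>z. phi (snd z) (pred \<omega> t (fst z)))"
    by (rule rho.integrable_const_bound[where B="loss_bound t"]) (use phi_pred_bounds[OF g] loss_pred_measurable_rho[OF assms] in \<open>auto simp: space_rho\<close>)
  show "0 \<le> risk \<omega> t" unfolding risk_def by (rule integral_nonneg_AE) (use phi_pred_bounds[OF g] in \<open>auto simp: space_rho\<close>)
  show "risk \<omega> t \<le> loss_bound t" unfolding risk_def
    by (rule rho.integral_le_const[OF i]) (use phi_pred_bounds[OF g] in \<open>auto simp: space_rho\<close>)
qed

lemma loss_fH_measurable: "(\<lambda>z. phi (snd z) (eval_h Phi fH (fst z))) \<in> borel_measurable rho"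
proof -
  have "(\<lambda>z. (\<lambda>w. phi (snd (fst w)) (snd w)) (z, eval_h Phi fH (fst z))) \<in> borel_measurable rho"
    by (rule measurable_compose[OF measurable_Pair[OF measurable_ident_sets[OF refl] fH_measurable] loss_measurable])
  then show ?thesis by simp
qed

lemma loss_fH_bounds: "z \<in> space rho \<Longrightarrow> 0 \<le> phi (snd z) (eval_h Phi fH (fst z)) \<and> phi (snd z) (eval_h Phi fH (fst z)) \<le> B"
  using phi_fH_le phi_nonneg by (auto simp: space_rho mem_Times_iff eval_h_def eval_h_def)

lemma risk_H_bounds: "0 \<le> risk_H" "risk_H \<le> B"
proof -
  have i: "integrable rho (\<lambda>z. phi (snd z) (eval_h Phi fH (fst z)))"
    by (rule rho.integrable_const_bound[where B=B]) (use loss_fH_bounds loss_fH_measurable in auto)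
  show "0 \<le> risk_H" unfolding risk_H_def by (rule integral_nonneg_AE) (use loss_fH_bounds in auto)
  show "risk_H \<le> B" unfolding risk_H_def by (rule rho.integral_le_const[OF i]) (use loss_fH_bounds in auto)
qed

lemma gen_err_iter: assumes "\<omega> \<in> space (samples UNIV)"
  shows "gen_err rho phi (eval_h Phi (iter \<omega> t)) = ennreal (risk \<omega> t)"
proof -
  have g: "\<And>k. k < t \<Longrightarrow> \<omega> k \<in> X \<times> Y" using space_samples_lessThan[OF assms] by auto
  have i: "integrable rho (\<lambda>z. phi (snd z) (pred \<omega> t (fst z)))"
    by (rule rho.integrable_const_bound[where B="loss_bound t"]) (use phi_pred_bounds[OF g] loss_pred_measurable_rho[OF assms] in \<open>auto simp: space_rho\<close>)
  have "gen_err rho phi (eval_h Phi (iter \<omega> t)) = (\<integral>\<^sup>+z. ennreal (phi (snd z) (pred \<omega> t (fst z))) \<partial>rho)"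
    unfolding gen_err_def eval_h_def pred_def ..
  also have "\<dots> = ennreal (risk \<omega> t)" unfolding risk_def
    by (rule nn_integral_eq_integral[OF i]) (use phi_pred_bounds[OF g] in \<open>auto simp: space_rho\<close>)
  finally show ?thesis .
qed

lemma gen_err_H: "gen_err rho phi (eval_h Phi fH) = ennreal risk_H"
proof -
  have i: "integrable rho (\<lambda>z. phi (snd z) (eval_h Phi fH (fst z)))"
    by (rule rho.integrable_const_bound[where B=B]) (use loss_fH_bounds loss_fH_measurable in auto)
  have "gen_err rho phi (eval_h Phi fH) = (\<integral>\<^sup>+z. ennreal (phi (snd z) (eval_h Phi fH (fst z))) \<partial>rho)"
    unfolding gen_err_def eval_h_def eval_h_def ..
  also have "\<dots> = ennreal risk_H" unfolding risk_H_def
    by (rule nn_integral_eq_integral[OF i]) (use loss_fH_bounds in auto)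
  finally show ?thesis .
qed

lemma risk_H_le_risk: "\<omega> \<in> space (samples UNIV) \<Longrightarrow> risk_H \<le> risk \<omega> t"
  using fH_min[of "iter \<omega> t"] gen_err_iter[of \<omega> t] gen_err_H risk_bounds[of \<omega> UNIV t] risk_H_bounds
  by (simp add: ennreal_le_iff)

lemma prob_space_samples: "prob_space (samples UNIV)"
  by (rule prob_space_PiM) (simp add: rho_prob)

interpretation S: prob_space "samples UNIV"
  by (rule prob_space_samples)

lemma integrable_risk: "integrable (samples UNIV) (\<lambda>\<omega>. risk \<omega> t)"
  by (rule S.integrable_const_bound[where B="loss_bound t"]) (use risk_bounds[of _ UNIV t] risk_measurable[of t UNIV] in auto)

lemma expectation_loss_sample: "(\<integral>\<omega>. phi (snd (\<omega> t)) (pred \<omega> t (fst (\<omega> t))) \<partial>samples UNIV) = exp_risk t"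
proof -
  have "(\<integral>\<omega>. (\<lambda>w. phi (snd (snd w)) (pred (fst w) t (fst (snd w)))) (\<omega>, \<omega> t) \<partial>samples UNIV)
      = (\<integral>\<omega>. (\<integral>z. (\<lambda>w. phi (snd (snd w)) (pred (fst w) t (fst (snd w)))) (\<omega>, z) \<partial>rho) \<partial>samples UNIV)"
  proof (rule integral_PiM_fresh_coordinate[OF rho_prob, where C="loss_bound t"])
    show "(\<lambda>w. phi (snd (snd w)) (pred (fst w) t (fst (snd w)))) \<in> borel_measurable (samples (UNIV - {t}) \<Otimes>\<^sub>M rho)"
      by (rule loss_pred_measurable) auto
    show "(\<lambda>w. phi (snd (snd w)) (pred (fst w) t (fst (snd w)))) \<in> borel_measurable (samples UNIV \<Otimes>\<^sub>M rho)"
      by (rule loss_pred_measurable) auto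
  next
    fix \<omega> :: "nat \<Rightarrow> 'x \<times> real" and z assume a: "\<And>k. k \<noteq> t \<Longrightarrow> \<omega> k \<in> space rho" "z \<in> space rho"
    have g: "\<And>k. k < t \<Longrightarrow> \<omega> k \<in> X \<times> Y" using a(1) space_rho by auto
    show "\<bar>(\<lambda>w. phi (snd (snd w)) (pred (fst w) t (fst (snd w)))) (\<omega>, z)\<bar> \<le> loss_bound t"
      using phi_pred_bounds[OF g, where z=z] a(2) space_rho by auto
  next
    fix \<omega> :: "nat \<Rightarrow> 'x \<times> real" and x z
    show "(\<lambda>w. phi (snd (snd w)) (pred (fst w) t (fst (snd w)))) (fun_upd \<omega> t x, z) = (\<lambda>w. phi (snd (snd w)) (pred (fst w) t (fst (snd w)))) (\<omega>, z)"
      using pred_fun_upd[of t t \<omega> x] by simp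
  qed
  then show ?thesis by (simp add: exp_risk_def risk_def)
qed

lemma expectation_loss_fH_sample: "(\<integral>\<omega>. phi (snd (\<omega> t)) (eval_h Phi fH (fst (\<omega> t))) \<partial>samples UNIV) = risk_H"
  unfolding risk_H_def by (rule integral_PiM_component[OF rho_prob loss_fH_measurable]) simp

lemma dist_sq_Suc:
  assumes t: "1 \<le> t" and x: "fst (\<omega> t) \<in> X"
  shows "dist_sq \<omega> (Suc t) = dist_sq \<omega> t - 2 * (eta t * grad \<omega> t) * (pred \<omega> t (fst (\<omega> t)) - eval_h Phi fH (fst (\<omega> t)))
     + (eta t * grad \<omega> t)\<^sup>2 * K (fst (\<omega> t)) (fst (\<omega> t))"
proof -
  define u where "u = iter \<omega> t - fH"
  define c where "c = eta t * grad \<omega> t"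
  define v where "v = Phi (fst (\<omega> t))"
  have "iter \<omega> (Suc t) - fH = u - c *\<^sub>R v" unfolding u_def c_def v_def using t by (simp add: iter_Suc)
  then have "dist_sq \<omega> (Suc t) = inner (u - c *\<^sub>R v) (u - c *\<^sub>R v)" by (simp add: dist_sq_def power2_norm_eq_inner)
  also have "\<dots> = inner u u - 2 * c * inner u v + c\<^sup>2 * inner v v"
    by (simp add: inner_diff_left inner_diff_right inner_commute power2_eq_square algebra_simps)
  also have "inner u u = dist_sq \<omega> t" unfolding u_def dist_sq_def by (simp add: power2_norm_eq_inner)
  also have "inner u v = pred \<omega> t (fst (\<omega> t)) - eval_h Phi fH (fst (\<omega> t))" unfolding u_def v_def pred_def eval_h_def
    by (simp add: inner_diff_left)
  also have "inner v v = K (fst (\<omega> t)) (fst (\<omega> t))" unfolding v_def using K_feature[OF x x] by simp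
  finally show ?thesis unfolding c_def .
qed

lemma dist_sq_measurable: "(\<lambda>\<omega>. dist_sq \<omega> t) \<in> borel_measurable (samples UNIV)"
proof (induction t)
  case 0 then show ?case by (simp add: dist_sq_def)
next
  case (Suc t)
  show ?case
  proof (cases "t = 0")
    case True then show ?thesis by (simp add: dist_sq_def)
  next
    case False
    have fx: "(\<lambda>\<omega>. pred \<omega> t (fst (\<omega> t))) \<in> borel_measurable (samples UNIV)" by (rule pred_sample_measurable) auto
    have g: "(\<lambda>\<omega>. grad \<omega> t) \<in> borel_measurable (samples UNIV)" by (rule grad_measurable) auto
    have h: "(\<lambda>\<omega>. eval_h Phi fH (fst (\<omega> t))) \<in> borel_measurable (samples UNIV)"
      by (rule measurable_compose[OF component_measurable fH_measurable]) simp
    have k: "(\<lambda>\<omega>. K (fst (\<omega> t)) (fst (\<omega> t))) \<in> borel_measurable (samples UNIV)"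
    proof -
      have "(\<lambda>\<omega>. (\<lambda>w. K (fst (fst w)) (fst (snd w))) (\<omega> t, \<omega> t)) \<in> borel_measurable (samples UNIV)"
        by (rule measurable_compose[OF measurable_Pair[OF component_measurable component_measurable] kernel_measurable]) auto
      then show ?thesis by simp
    qed
    have "(\<lambda>\<omega>. dist_sq \<omega> t - 2 * (eta t * grad \<omega> t) * (pred \<omega> t (fst (\<omega> t)) - eval_h Phi fH (fst (\<omega> t)))
     + (eta t * grad \<omega> t)\<^sup>2 * K (fst (\<omega> t)) (fst (\<omega> t))) \<in> borel_measurable (samples UNIV)"
      using Suc.IH fx g h k by measurable
    then show ?thesis
    proof (rule measurable_cong[THEN iffD1, rotated])
      fix \<omega> assume "\<omega> \<in> space (samples UNIV)"
      then have "fst (\<omega> t) \<in> X" using space_samples[of \<omega> UNIV t] by (auto simp: mem_Times_iff)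
      then show "dist_sq \<omega> t - 2 * (eta t * grad \<omega> t) * (pred \<omega> t (fst (\<omega> t)) - eval_h Phi fH (fst (\<omega> t)))
     + (eta t * grad \<omega> t)\<^sup>2 * K (fst (\<omega> t)) (fst (\<omega> t)) = dist_sq \<omega> (Suc t)"
        using dist_sq_Suc[of t \<omega>] False by simp
    qed
  qed
qed

lemma dist_sq_bounds: "\<omega> \<in> space (samples UNIV) \<Longrightarrow> 0 \<le> dist_sq \<omega> t \<and> dist_sq \<omega> t \<le> (norm_bound t + norm fH)\<^sup>2"
proof -
  assume w: "\<omega> \<in> space (samples UNIV)"
  have "norm (iter \<omega> t - fH) \<le> norm (iter \<omega> t) + norm fH" by (rule norm_triangle_ineq4)
  also have "\<dots> \<le> norm_bound t + norm fH" using norm_iter_le[of t \<omega>] space_samples_lessThan[OF w, of t] by simp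
  finally show ?thesis unfolding dist_sq_def by (simp add: power_mono)
qed

lemma integrable_dist_sq: "integrable (samples UNIV) (\<lambda>\<omega>. dist_sq \<omega> t)"
  by (rule S.integrable_const_bound[where B="(norm_bound t + norm fH)\<^sup>2"]) (use dist_sq_bounds dist_sq_measurable in auto)

lemma loss_sample_measurable: "(\<lambda>\<omega>. phi (snd (\<omega> t)) (pred \<omega> t (fst (\<omega> t)))) \<in> borel_measurable (samples UNIV)"
proof -
  have "(\<lambda>\<omega>. (\<lambda>w. phi (snd (snd w)) (pred (fst w) t (fst (snd w)))) (\<omega>, \<omega> t)) \<in> borel_measurable (samples UNIV)"
    by (rule measurable_compose[OF measurable_Pair[OF measurable_ident_sets[OF refl] component_measurable] loss_pred_measurable]) auto
  then show ?thesis by simp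
qed

lemma integrable_loss_sample: "integrable (samples UNIV) (\<lambda>\<omega>. phi (snd (\<omega> t)) (pred \<omega> t (fst (\<omega> t))))"
proof (rule S.integrable_const_bound[where B="loss_bound t"])
  show "AE \<omega> in samples UNIV. norm (phi (snd (\<omega> t)) (pred \<omega> t (fst (\<omega> t)))) \<le> loss_bound t"
  proof (rule AE_I2)
    fix \<omega> assume w: "\<omega> \<in> space (samples UNIV)"
    have g: "\<And>k. k < t \<Longrightarrow> \<omega> k \<in> X \<times> Y" using space_samples_lessThan[OF w] by auto
    show "norm (phi (snd (\<omega> t)) (pred \<omega> t (fst (\<omega> t)))) \<le> loss_bound t"
      using phi_pred_bounds[OF g, where z="\<omega> t"] space_samples[OF w] by auto
  qed
qed (rule loss_sample_measurable)

lemma loss_fH_sample_measurable: "(\<lambda>\<omega>. phi (snd (\<omega> t)) (eval_h Phi fH (fst (\<omega> t)))) \<in> borel_measurable (samples UNIV)"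
  by (rule measurable_compose[OF component_measurable loss_fH_measurable]) simp

lemma integrable_loss_fH_sample: "integrable (samples UNIV) (\<lambda>\<omega>. phi (snd (\<omega> t)) (eval_h Phi fH (fst (\<omega> t))))"
proof (rule S.integrable_const_bound[where B=B])
  show "AE \<omega> in samples UNIV. norm (phi (snd (\<omega> t)) (eval_h Phi fH (fst (\<omega> t)))) \<le> B"
    by (rule AE_I2) (use loss_fH_bounds space_samples[of _ UNIV t] space_rho in auto)
qed (rule loss_fH_sample_measurable)

lemma dist_sq_step:
  assumes w: "\<omega> \<in> space (samples UNIV)" and t: "1 \<le> t"
  shows "dist_sq \<omega> (Suc t) \<le> dist_sq \<omega> t - 2 * eta t * (phi (snd (\<omega> t)) (pred \<omega> t (fst (\<omega> t))) - phi (snd (\<omega> t)) (eval_h Phi fH (fst (\<omega> t))))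
     + (eta t)\<^sup>2 * \<kappa>\<^sup>2 * (1 + self_bound_const L \<alpha> * phi (snd (\<omega> t)) (pred \<omega> t (fst (\<omega> t))))"
proof -
  have xy: "fst (\<omega> t) \<in> X" "snd (\<omega> t) \<in> Y" using space_samples[OF w, of t] by (auto simp: mem_Times_iff)
  define s where "s = pred \<omega> t (fst (\<omega> t))"
  define s' where "s' = eval_h Phi fH (fst (\<omega> t))"
  define y where "y = snd (\<omega> t)"
  define g where "g = grad \<omega> t"
  have gdef: "g = dphi y s" unfolding g_def grad_def y_def s_def ..
  have y: "y \<in> Y" using xy(2) unfolding y_def .
  have e: "0 < eta t" using eta_pos[OF t] .
  have tan: "phi y s - phi y s' \<le> g * (s - s')"
    using phi_above_tangent[OF y, of s s'] unfolding gdef by (simp add: algebra_simps)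
  have A: "2 * eta t * (phi y s - phi y s') \<le> 2 * (eta t * g) * (s - s')"
    using mult_left_mono[OF tan, of "2 * eta t"] e by (simp add: mult_ac)
  have Kx: "0 \<le> K (fst (\<omega> t)) (fst (\<omega> t))" "K (fst (\<omega> t)) (fst (\<omega> t)) \<le> \<kappa>\<^sup>2"
    using abs_K_le[OF xy(1) xy(1)] K_feature[OF xy(1) xy(1)] by auto
  have g2: "g\<^sup>2 \<le> 1 + self_bound_const L \<alpha> * phi y s" unfolding gdef by (rule holder_smooth_loss.deriv_square_le[OF loss_holder_smooth[OF y]])
  have B0: "g\<^sup>2 * K (fst (\<omega> t)) (fst (\<omega> t)) \<le> (1 + self_bound_const L \<alpha> * phi y s) * \<kappa>\<^sup>2"
    by (rule mult_mono[OF g2 Kx(2)]) (use Kx self_bound_pos phi_nonneg[OF y, of s] in auto)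
  have B: "(eta t * g)\<^sup>2 * K (fst (\<omega> t)) (fst (\<omega> t)) \<le> (eta t)\<^sup>2 * \<kappa>\<^sup>2 * (1 + self_bound_const L \<alpha> * phi y s)"
  proof -
    have "(eta t * g)\<^sup>2 * K (fst (\<omega> t)) (fst (\<omega> t)) = (eta t)\<^sup>2 * (g\<^sup>2 * K (fst (\<omega> t)) (fst (\<omega> t)))"
      by (simp add: power_mult_distrib)
    also have "\<dots> \<le> (eta t)\<^sup>2 * ((1 + self_bound_const L \<alpha> * phi y s) * \<kappa>\<^sup>2)" by (rule mult_left_mono[OF B0]) simp
    finally show ?thesis by (simp add: mult_ac)
  qed
  show ?thesis using dist_sq_Suc[of t \<omega>, OF t xy(1)] A B unfolding s_def[symmetric] s'_def[symmetric] y_def[symmetric] g_def[symmetric]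
    by linarith
qed

lemma exp_dist_sq_step:
  assumes t: "1 \<le> t"
  shows "exp_dist_sq (Suc t) \<le> exp_dist_sq t - 2 * eta t * (exp_risk t - risk_H) + (eta t)\<^sup>2 * \<kappa>\<^sup>2 * (1 + self_bound_const L \<alpha> * exp_risk t)"
proof -
  let ?f1 = "\<lambda>\<omega>. phi (snd (\<omega> t)) (pred \<omega> t (fst (\<omega> t)))"
  let ?f2 = "\<lambda>\<omega>. phi (snd (\<omega> t)) (eval_h Phi fH (fst (\<omega> t)))"
  have "exp_dist_sq (Suc t) \<le> (\<integral>\<omega>. dist_sq \<omega> t - 2 * eta t * (?f1 \<omega> - ?f2 \<omega>) + (eta t)\<^sup>2 * \<kappa>\<^sup>2 * (1 + self_bound_const L \<alpha> * ?f1 \<omega>) \<partial>samples UNIV)"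
    unfolding exp_dist_sq_def
    by (rule integral_mono[OF integrable_dist_sq _ dist_sq_step[OF _ t]]) (use integrable_dist_sq integrable_loss_sample integrable_loss_fH_sample in simp_all)
  also have "\<dots> = exp_dist_sq t - 2 * eta t * (exp_risk t - risk_H) + (eta t)\<^sup>2 * \<kappa>\<^sup>2 * (1 + self_bound_const L \<alpha> * exp_risk t)"
    using integrable_dist_sq integrable_loss_sample integrable_loss_fH_sample expectation_loss_sample[of t] expectation_loss_fH_sample[of t]
    by (simp add: exp_dist_sq_def algebra_simps S.prob_space)
  finally show ?thesis .
qed

text \<open>\<open>risk_grad \<omega> t\<close> is the gradient of \<open>gen_err rho phi\<close> at \<open>f\<^sub>t\<close>, evaluated via the kernel.\<close>
definition risk_grad :: "(nat \<Rightarrow> 'x \<times> real) \<Rightarrow> nat \<Rightarrow> 'x \<Rightarrow> real" where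
  "risk_grad \<omega> t x' = (\<integral>z. dphi (snd z) (pred \<omega> t (fst z)) * K x' (fst z) \<partial>rho)"

lemma risk_grad_measurable: "{..<t} \<subseteq> I \<Longrightarrow> (\<lambda>w. risk_grad (fst w) t (fst (snd w))) \<in> borel_measurable (samples I \<Otimes>\<^sub>M rho)"
proof -
  assume a: "{..<t} \<subseteq> I"
  let ?g = "\<lambda>u::((nat \<Rightarrow> 'x \<times> real) \<times> ('x \<times> real)) \<times> ('x \<times> real).
     dphi (snd (snd u)) (pred (fst (fst u)) t (fst (snd u))) * K (fst (snd (fst u))) (fst (snd u))"
  have m1: "(\<lambda>u. (\<lambda>w. dphi (snd (snd w)) (pred (fst w) t (fst (snd w)))) (fst (fst u), snd u))
      \<in> borel_measurable ((samples I \<Otimes>\<^sub>M rho) \<Otimes>\<^sub>M rho)"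
    by (rule measurable_compose[OF measurable_Pair[OF measurable_compose[OF measurable_fst measurable_fst] measurable_snd] dloss_pred_measurable[OF a]])
  have m2: "(\<lambda>u. (\<lambda>w. K (fst (fst w)) (fst (snd w))) (snd (fst u), snd u)) \<in> borel_measurable ((samples I \<Otimes>\<^sub>M rho) \<Otimes>\<^sub>M rho)"
    by (rule measurable_compose[OF measurable_Pair[OF measurable_compose[OF measurable_fst measurable_snd] measurable_snd] kernel_measurable])
  have "?g \<in> borel_measurable ((samples I \<Otimes>\<^sub>M rho) \<Otimes>\<^sub>M rho)"
    using m1 m2 by (intro borel_measurable_times) auto
  then have "(\<lambda>w. \<integral>z. ?g (w, z) \<partial>rho) \<in> borel_measurable (samples I \<Otimes>\<^sub>M rho)"
    by (intro sigma_finite_measure.borel_measurable_lebesgue_integral[OF prob_space_imp_sigma_finite[OF rho_prob]])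
       (simp add: case_prod_beta')
  then show ?thesis by (simp add: risk_grad_def)
qed

lemma K_measurable: "x' \<in> X \<Longrightarrow> (\<lambda>z. K x' (fst z)) \<in> borel_measurable rho"
proof (rule measurable_continuous_on_space)
  assume x: "x' \<in> X"
  have "continuous_on (X \<times> Y) ((\<lambda>(x, x'). K x x') \<circ> (\<lambda>z. (x', fst z)))"
    by (rule continuous_on_compose[OF _ continuous_on_subset[OF K_cont]]) (use x in \<open>auto intro!: continuous_intros\<close>)
  then show "continuous_on (X \<times> Y) (\<lambda>z. K x' (fst z))" by (simp add: comp_def)
qed

lemma dloss_K_measurable: "\<omega> \<in> space (samples I) \<Longrightarrow> {..<t} \<subseteq> I \<Longrightarrow> x' \<in> X \<Longrightarrow>
  (\<lambda>z. dphi (snd z) (pred \<omega> t (fst z)) * K x' (fst z)) \<in> borel_measurable rho"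
  using measurable_Pair2[OF dloss_pred_measurable] K_measurable by (intro borel_measurable_times) auto

lemma abs_dloss_K_le: "(\<And>k. k < t \<Longrightarrow> \<omega> k \<in> X \<times> Y) \<Longrightarrow> x' \<in> X \<Longrightarrow> z \<in> space rho \<Longrightarrow>
  \<bar>dphi (snd z) (pred \<omega> t (fst z)) * K x' (fst z)\<bar> \<le> grad_bound t * \<kappa>\<^sup>2"
proof -
  assume g: "\<And>k. k < t \<Longrightarrow> \<omega> k \<in> X \<times> Y" and x: "x' \<in> X" and z: "z \<in> space rho"
  have "\<bar>dphi (snd z) (pred \<omega> t (fst z))\<bar> \<le> grad_bound t" using abs_dphi_pred_le[OF g] z space_rho by auto
  moreover have "\<bar>K x' (fst z)\<bar> \<le> \<kappa>\<^sup>2" using abs_K_le x z space_rho by (auto simp: mem_Times_iff)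
  ultimately show ?thesis by (simp add: abs_mult mult_mono' grad_bound_nonneg del: power2_abs)
qed

lemma abs_risk_grad_le: "(\<And>k. k < t \<Longrightarrow> \<omega> k \<in> X \<times> Y) \<Longrightarrow> x' \<in> X \<Longrightarrow> \<bar>risk_grad \<omega> t x'\<bar> \<le> grad_bound t * \<kappa>\<^sup>2"
proof -
  assume g: "\<And>k. k < t \<Longrightarrow> \<omega> k \<in> X \<times> Y" and x: "x' \<in> X"
  show ?thesis unfolding risk_grad_def
    by (rule rho.abs_integral_le_const) (use grad_bound_nonneg abs_dloss_K_le[OF g x] in auto)
qed

lemma loss_pred_Suc_le:
  assumes w: "\<omega> \<in> space (samples UNIV)" and t: "1 \<le> t" and z: "z \<in> space rho"
  shows "phi (snd z) (pred \<omega> (Suc t) (fst z)) \<le> phi (snd z) (pred \<omega> t (fst z))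
    - eta t * grad \<omega> t * (dphi (snd z) (pred \<omega> t (fst z)) * K (fst (\<omega> t)) (fst z))
    + L * (\<bar>eta t * grad \<omega> t\<bar> * \<kappa>\<^sup>2) powr (1 + \<alpha>)"
proof -
  define c where "c = eta t * grad \<omega> t"
  define s where "s = pred \<omega> t (fst z)"
  have xt: "fst (\<omega> t) \<in> X" using space_samples[OF w, of t] by auto
  have y: "snd z \<in> Y" and x: "fst z \<in> X" using z space_rho by (auto simp: mem_Times_iff)
  have step: "pred \<omega> (Suc t) (fst z) = s - c * K (fst (\<omega> t)) (fst z)"
    unfolding c_def s_def using pred_Suc[of t \<omega>, OF t xt x] by simp
  have "\<bar>c\<bar> * \<bar>K (fst (\<omega> t)) (fst z)\<bar> \<le> \<bar>c\<bar> * \<kappa>\<^sup>2"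
    using abs_K_le[OF xt x] by (rule mult_left_mono) simp
  then have "\<bar>(s - c * K (fst (\<omega> t)) (fst z)) - s\<bar> powr (1 + \<alpha>) \<le> (\<bar>c\<bar> * \<kappa>\<^sup>2) powr (1 + \<alpha>)"
    using alpha by (intro powr_mono2) (auto simp: abs_mult)
  then have "L * \<bar>(s - c * K (fst (\<omega> t)) (fst z)) - s\<bar> powr (1 + \<alpha>) \<le> L * (\<bar>c\<bar> * \<kappa>\<^sup>2) powr (1 + \<alpha>)"
    using L_pos by (intro mult_left_mono) auto
  moreover have "dphi (snd z) s * ((s - c * K (fst (\<omega> t)) (fst z)) - s) = - c * (dphi (snd z) s * K (fst (\<omega> t)) (fst z))"
    by (simp add: algebra_simps)
  ultimately show ?thesis
    using holder_smooth_loss.descent[OF loss_holder_smooth[OF y], of "s - c * K (fst (\<omega> t)) (fst z)" s]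
    unfolding step c_def[symmetric] s_def[symmetric] by linarith
qed

lemma step_powr_le:
  assumes w: "\<omega> \<in> space (samples UNIV)" and t: "1 \<le> t"
  shows "(\<bar>eta t * grad \<omega> t\<bar> * \<kappa>\<^sup>2) powr (1 + \<alpha>)
    \<le> eta t powr (1 + \<alpha>) * (\<kappa>\<^sup>2) powr (1 + \<alpha>) * (1 + self_bound_const L \<alpha> * phi (snd (\<omega> t)) (pred \<omega> t (fst (\<omega> t))))"
proof -
  have y: "snd (\<omega> t) \<in> Y" using space_samples[OF w, of t] by auto
  have "(\<bar>eta t * grad \<omega> t\<bar> * \<kappa>\<^sup>2) powr (1 + \<alpha>) = eta t powr (1 + \<alpha>) * (\<kappa>\<^sup>2) powr (1 + \<alpha>) * \<bar>grad \<omega> t\<bar> powr (1 + \<alpha>)"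
    using eta_pos[OF t] by (simp add: abs_mult powr_mult mult_ac)
  moreover have "\<bar>grad \<omega> t\<bar> powr (1 + \<alpha>) \<le> 1 + self_bound_const L \<alpha> * phi (snd (\<omega> t)) (pred \<omega> t (fst (\<omega> t)))"
    unfolding grad_def by (rule holder_smooth_loss.abs_deriv_powr_one_plus_alpha_le[OF loss_holder_smooth[OF y]])
  ultimately show ?thesis
    by (metis mult_left_mono mult_nonneg_nonneg powr_ge_zero)
qed

lemma risk_step:
  assumes w: "\<omega> \<in> space (samples UNIV)" and t: "1 \<le> t"
  shows "risk \<omega> (Suc t) \<le> risk \<omega> t - eta t * (grad \<omega> t * risk_grad \<omega> t (fst (\<omega> t)))
     + L * eta t powr (1 + \<alpha>) * (\<kappa>\<^sup>2) powr (1 + \<alpha>)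
       * (1 + self_bound_const L \<alpha> * phi (snd (\<omega> t)) (pred \<omega> t (fst (\<omega> t))))"
proof -
  have xt: "fst (\<omega> t) \<in> X" using space_samples[OF w, of t] by auto
  have samples_before: "\<And>k. k < t \<Longrightarrow> \<omega> k \<in> X \<times> Y" "\<And>k. k < Suc t \<Longrightarrow> \<omega> k \<in> X \<times> Y"
    using space_samples[OF w] by auto
  let ?c = "eta t * grad \<omega> t"
  have int_loss: "integrable rho (\<lambda>z. phi (snd z) (pred \<omega> u (fst z)))" if "u \<le> Suc t" for u
    using phi_pred_bounds[of u \<omega>] samples_before(2) that loss_pred_measurable_rho[OF w, of u]
    by (intro rho.integrable_const_bound[where B="loss_bound u"] AE_I2) (auto simp: space_rho)
  have int_grad: "integrable rho (\<lambda>z. dphi (snd z) (pred \<omega> t (fst z)) * K (fst (\<omega> t)) (fst z))"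
    using abs_dloss_K_le[OF samples_before(1) xt] dloss_K_measurable[OF w _ xt]
    by (intro rho.integrable_const_bound[where B="grad_bound t * \<kappa>\<^sup>2"] AE_I2) auto
  have "risk \<omega> (Suc t) \<le> (\<integral>z. phi (snd z) (pred \<omega> t (fst z))
      - ?c * (dphi (snd z) (pred \<omega> t (fst z)) * K (fst (\<omega> t)) (fst z))
      + L * (\<bar>?c\<bar> * \<kappa>\<^sup>2) powr (1 + \<alpha>) \<partial>rho)"
    unfolding risk_def using int_loss int_grad loss_pred_Suc_le[OF w t]
    by (intro integral_mono) auto
  also have "\<dots> = risk \<omega> t - ?c * risk_grad \<omega> t (fst (\<omega> t)) + L * (\<bar>?c\<bar> * \<kappa>\<^sup>2) powr (1 + \<alpha>)"
    using int_loss[of t] int_grad by (simp add: risk_def risk_grad_def rho.prob_space)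
  finally have "risk \<omega> (Suc t) \<le> risk \<omega> t - ?c * risk_grad \<omega> t (fst (\<omega> t)) + L * (\<bar>?c\<bar> * \<kappa>\<^sup>2) powr (1 + \<alpha>)" .
  moreover have "L * (\<bar>?c\<bar> * \<kappa>\<^sup>2) powr (1 + \<alpha>) \<le> L * (eta t powr (1 + \<alpha>) * (\<kappa>\<^sup>2) powr (1 + \<alpha>)
      * (1 + self_bound_const L \<alpha> * phi (snd (\<omega> t)) (pred \<omega> t (fst (\<omega> t)))))"
    using step_powr_le[OF w t] L_pos by (intro mult_left_mono) auto
  ultimately show ?thesis unfolding mult.assoc by linarith
qed

lemma risk_grad_fun_upd: "risk_grad (fun_upd \<omega> t x) t = risk_grad \<omega> t"
  unfolding risk_grad_def using pred_fun_upd[of t t \<omega> x] by simp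

lemma grad_risk_grad_measurable: "(\<lambda>\<omega>. grad \<omega> t * risk_grad \<omega> t (fst (\<omega> t))) \<in> borel_measurable (samples UNIV)"
proof -
  have "(\<lambda>\<omega>. (\<lambda>w. risk_grad (fst w) t (fst (snd w))) (\<omega>, \<omega> t)) \<in> borel_measurable (samples UNIV)"
    by (rule measurable_compose[OF measurable_Pair[OF measurable_ident_sets[OF refl] component_measurable] risk_grad_measurable]) auto
  then show ?thesis using grad_measurable[of t UNIV] by (intro borel_measurable_times) auto
qed

lemma integrable_grad_risk_grad: "integrable (samples UNIV) (\<lambda>\<omega>. grad \<omega> t * risk_grad \<omega> t (fst (\<omega> t)))"
proof (rule S.integrable_const_bound[where B="grad_bound t * (grad_bound t * \<kappa>\<^sup>2)"])
  show "AE \<omega> in samples UNIV. norm (grad \<omega> t * risk_grad \<omega> t (fst (\<omega> t))) \<le> grad_bound t * (grad_bound t * \<kappa>\<^sup>2)"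
  proof (rule AE_I2)
    fix \<omega> assume w: "\<omega> \<in> space (samples UNIV)"
    have g: "\<And>k. k < t \<Longrightarrow> \<omega> k \<in> X \<times> Y" using space_samples_lessThan[OF w] by auto
    have xy: "\<omega> t \<in> X \<times> Y" using space_samples[OF w] by auto
    have "\<bar>grad \<omega> t\<bar> \<le> grad_bound t" unfolding grad_def using abs_dphi_pred_le[OF g xy] .
    moreover have "\<bar>risk_grad \<omega> t (fst (\<omega> t))\<bar> \<le> grad_bound t * \<kappa>\<^sup>2" using abs_risk_grad_le[OF g] xy by (auto simp: mem_Times_iff)
    ultimately show "norm (grad \<omega> t * risk_grad \<omega> t (fst (\<omega> t))) \<le> grad_bound t * (grad_bound t * \<kappa>\<^sup>2)"
      by (simp add: abs_mult mult_mono')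
  qed
qed (rule grad_risk_grad_measurable)

text \<open>Since \<open>\<omega> t\<close> is independent of \<open>f\<^sub>t\<close>, the expectation is that of the squared norm of the
  gradient of the risk, written as a double kernel integral.\<close>
lemma expectation_grad_risk_grad_nonneg: "0 \<le> (\<integral>\<omega>. grad \<omega> t * risk_grad \<omega> t (fst (\<omega> t)) \<partial>samples UNIV)"
proof -
  let ?h = "\<lambda>w. dphi (snd (snd w)) (pred (fst w) t (fst (snd w))) * risk_grad (fst w) t (fst (snd w))"
  have mI: "?h \<in> borel_measurable (samples I \<Otimes>\<^sub>M rho)" if "{..<t} \<subseteq> I" for I
    using dloss_pred_measurable[OF that] risk_grad_measurable[OF that] by (intro borel_measurable_times) auto
  have "(\<integral>\<omega>. ?h (\<omega>, \<omega> t) \<partial>samples UNIV) = (\<integral>\<omega>. (\<integral>z. ?h (\<omega>, z) \<partial>rho) \<partial>samples UNIV)"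
  proof (rule integral_PiM_fresh_coordinate[OF rho_prob, where C="grad_bound t * (grad_bound t * \<kappa>\<^sup>2)"])
    show "?h \<in> borel_measurable (samples (UNIV - {t}) \<Otimes>\<^sub>M rho)" by (rule mI) auto
    show "?h \<in> borel_measurable (samples UNIV \<Otimes>\<^sub>M rho)" by (rule mI) auto
  next
    fix \<omega> :: "nat \<Rightarrow> 'x \<times> real" and z assume a: "\<And>k. k \<noteq> t \<Longrightarrow> \<omega> k \<in> space rho" "z \<in> space rho"
    have g: "\<And>k. k < t \<Longrightarrow> \<omega> k \<in> X \<times> Y" using a(1) space_rho by auto
    have z: "z \<in> X \<times> Y" using a(2) space_rho by simp
    have "\<bar>dphi (snd z) (pred \<omega> t (fst z))\<bar> \<le> grad_bound t" using abs_dphi_pred_le[OF g z] .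
    moreover have "\<bar>risk_grad \<omega> t (fst z)\<bar> \<le> grad_bound t * \<kappa>\<^sup>2" using abs_risk_grad_le[OF g] z by (auto simp: mem_Times_iff)
    ultimately show "\<bar>?h (\<omega>, z)\<bar> \<le> grad_bound t * (grad_bound t * \<kappa>\<^sup>2)" by (simp add: abs_mult mult_mono')
  next
    fix \<omega> :: "nat \<Rightarrow> 'x \<times> real" and x z
    show "?h (fun_upd \<omega> t x, z) = ?h (\<omega>, z)" using pred_fun_upd[of t t \<omega> x] risk_grad_fun_upd[of \<omega> t x] by simp
  qed
  moreover have "0 \<le> (\<integral>\<omega>. (\<integral>z. ?h (\<omega>, z) \<partial>rho) \<partial>samples UNIV)"
  proof (rule integral_nonneg_AE, rule AE_I2)
    fix \<omega> assume w: "\<omega> \<in> space (samples UNIV)"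
    have g: "\<And>k. k < t \<Longrightarrow> \<omega> k \<in> X \<times> Y" using space_samples_lessThan[OF w] by auto
    have "0 \<le> (\<integral>z'. dphi (snd z') (pred \<omega> t (fst z')) * (\<integral>z. dphi (snd z) (pred \<omega> t (fst z)) * K (fst z') (fst z) \<partial>rho) \<partial>rho)"
    proof (rule feature_kernel.double_integral_kernel_nonneg[OF feature_kernel_rho, where A="grad_bound t"])
      show "(\<lambda>z. dphi (snd z) (pred \<omega> t (fst z))) \<in> borel_measurable rho"
        using measurable_Pair2[OF dloss_pred_measurable[of t UNIV] w] by simp
      fix z assume "z \<in> space rho"
      then show "\<bar>dphi (snd z) (pred \<omega> t (fst z))\<bar> \<le> grad_bound t" using abs_dphi_pred_le[OF g] space_rho by auto
    qed
    then show "0 \<le> (\<integral>z. ?h (\<omega>, z) \<partial>rho)" by (simp add: risk_grad_def)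
  qed
  moreover have "(\<integral>\<omega>. ?h (\<omega>, \<omega> t) \<partial>samples UNIV) = (\<integral>\<omega>. grad \<omega> t * risk_grad \<omega> t (fst (\<omega> t)) \<partial>samples UNIV)"
    by (simp add: grad_def)
  ultimately show ?thesis by simp
qed

lemma exp_risk_step:
  assumes t: "1 \<le> t"
  shows "exp_risk (Suc t) \<le> exp_risk t
    + L * eta t powr (1 + \<alpha>) * (\<kappa>\<^sup>2) powr (1 + \<alpha>) * (1 + self_bound_const L \<alpha> * exp_risk t)"
proof -
  define e where "e = L * eta t powr (1 + \<alpha>) * (\<kappa>\<^sup>2) powr (1 + \<alpha>)"
  let ?f = "\<lambda>\<omega>. phi (snd (\<omega> t)) (pred \<omega> t (fst (\<omega> t)))"
  let ?q = "\<lambda>\<omega>. grad \<omega> t * risk_grad \<omega> t (fst (\<omega> t))"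
  have "exp_risk (Suc t) \<le> (\<integral>\<omega>. risk \<omega> t - eta t * ?q \<omega> + e * (1 + self_bound_const L \<alpha> * ?f \<omega>) \<partial>samples UNIV)"
    unfolding exp_risk_def
  proof (rule integral_mono[OF integrable_risk])
    show "integrable (samples UNIV) (\<lambda>\<omega>. risk \<omega> t - eta t * ?q \<omega> + e * (1 + self_bound_const L \<alpha> * ?f \<omega>))"
      using integrable_risk integrable_grad_risk_grad integrable_loss_sample by (simp add: distrib_left)
    show "risk \<omega> (Suc t) \<le> risk \<omega> t - eta t * ?q \<omega> + e * (1 + self_bound_const L \<alpha> * ?f \<omega>)"
      if "\<omega> \<in> space (samples UNIV)" for \<omega>
      unfolding e_def by (rule risk_step[OF that t])
  qed
  also have "\<dots> = exp_risk t - eta t * (\<integral>\<omega>. ?q \<omega> \<partial>samples UNIV) + e * (1 + self_bound_const L \<alpha> * exp_risk t)"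
    using integrable_risk integrable_grad_risk_grad integrable_loss_sample expectation_loss_sample[of t]
    by (simp add: exp_risk_def S.prob_space distrib_left)
  also have "\<dots> \<le> exp_risk t + e * (1 + self_bound_const L \<alpha> * exp_risk t)"
    using expectation_grad_risk_grad_nonneg[of t] eta_pos[OF t] by simp
  finally show ?thesis unfolding e_def .
qed

lemma risk_H_le_exp_risk: "risk_H \<le> exp_risk t"
proof -
  show ?thesis unfolding exp_risk_def by (rule S.integral_ge_const[OF integrable_risk]) (use risk_H_le_risk in auto)
qed

lemma exp_dist_sq_nonneg: "0 \<le> exp_dist_sq t"
  unfolding exp_dist_sq_def by (rule integral_nonneg_AE) (use dist_sq_bounds in auto)

definition excess_risk :: "nat \<Rightarrow> real" where
  "excess_risk t = exp_risk t - risk_H"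

definition recursion_const :: real where
  "recursion_const = (\<kappa>\<^sup>2 + L * (\<kappa>\<^sup>2) powr (1 + \<alpha>)) * (1 + self_bound_const L \<alpha> * (risk_H + 1)) + 1"

lemma recursion_const_pos: "0 < recursion_const"
proof -
  have "0 \<le> 1 + self_bound_const L \<alpha> * (risk_H + 1)"
    using self_bound_pos risk_H_bounds by simp
  moreover have "0 \<le> \<kappa>\<^sup>2 + L * (\<kappa>\<^sup>2) powr (1 + \<alpha>)"
    using L_pos by simp
  ultimately show ?thesis unfolding recursion_const_def by (simp add: add_nonneg_pos)
qed

lemma self_bound_exp_risk_le:
  "1 + self_bound_const L \<alpha> * exp_risk t \<le> (1 + self_bound_const L \<alpha> * (risk_H + 1)) * (1 + excess_risk t)"
proof -
  have "0 \<le> excess_risk t" unfolding excess_risk_def using risk_H_le_exp_risk[of t] by simp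
  then have "0 \<le> (1 + self_bound_const L \<alpha> * risk_H) * excess_risk t"
    using self_bound_pos risk_H_bounds by simp
  then show ?thesis
    using self_bound_pos \<open>0 \<le> excess_risk t\<close> unfolding excess_risk_def by (simp add: algebra_simps)
qed

lemma excess_risk_recursion: "descent_recursion excess_risk exp_dist_sq eta \<alpha> recursion_const"
proof unfold_locales
  define M where "M = 1 + self_bound_const L \<alpha> * (risk_H + 1)"
  have M_nonneg: "0 \<le> M" unfolding M_def using self_bound_pos risk_H_bounds by simp
  have bound: "c * (1 + self_bound_const L \<alpha> * exp_risk t) \<le> recursion_const * (1 + excess_risk t)"
    if "0 \<le> c" "c \<le> \<kappa>\<^sup>2 + L * (\<kappa>\<^sup>2) powr (1 + \<alpha>)" for c t
  proof -
    have "0 \<le> excess_risk t" unfolding excess_risk_def using risk_H_le_exp_risk[of t] by simp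
    have "c * (1 + self_bound_const L \<alpha> * exp_risk t) \<le> c * (M * (1 + excess_risk t))"
      using self_bound_exp_risk_le[of t] that(1) unfolding M_def by (rule mult_left_mono)
    also have "\<dots> \<le> recursion_const * (1 + excess_risk t)"
    proof -
      have "c * M \<le> recursion_const"
        using mult_right_mono[OF that(2) M_nonneg] unfolding recursion_const_def M_def by simp
      then show ?thesis
        using mult_right_mono[of "c * M" recursion_const "1 + excess_risk t"] \<open>0 \<le> excess_risk t\<close>
        by (simp add: mult.assoc)
    qed
    finally show ?thesis .
  qed
  fix t :: nat assume t: "1 \<le> t"
  have "(eta t)\<^sup>2 * (\<kappa>\<^sup>2 * (1 + self_bound_const L \<alpha> * exp_risk t)) \<le> (eta t)\<^sup>2 * (recursion_const * (1 + excess_risk t))"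
    using bound[of "\<kappa>\<^sup>2" t] L_pos by (intro mult_left_mono) auto
  then show "exp_dist_sq (Suc t) \<le> exp_dist_sq t - 2 * eta t * excess_risk t + recursion_const * (eta t)\<^sup>2 * (1 + excess_risk t)"
    using exp_dist_sq_step[OF t] unfolding excess_risk_def by (simp add: mult_ac)
  have "eta t powr (1 + \<alpha>) * (L * (\<kappa>\<^sup>2) powr (1 + \<alpha>) * (1 + self_bound_const L \<alpha> * exp_risk t))
      \<le> eta t powr (1 + \<alpha>) * (recursion_const * (1 + excess_risk t))"
    using bound[of "L * (\<kappa>\<^sup>2) powr (1 + \<alpha>)" t] L_pos by (intro mult_left_mono) auto
  then show "excess_risk (Suc t) \<le> excess_risk t + recursion_const * eta t powr (1 + \<alpha>) * (1 + excess_risk t)"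
    using exp_risk_step[OF t] unfolding excess_risk_def by (simp add: mult_ac)
qed (use risk_H_le_exp_risk exp_dist_sq_nonneg eta_pos alpha eta_div eta_lim recursion_const_pos
       in \<open>auto simp: excess_risk_def\<close>)

lemma exp_gen_err_eq:
  "(\<integral>\<^sup>+ \<omega>. gen_err rho phi (eval_h Phi (ogd eta dphi Phi \<omega> t)) \<partial>samples UNIV) = ennreal (exp_risk t)"
proof -
  have "(\<integral>\<^sup>+ \<omega>. gen_err rho phi (eval_h Phi (ogd eta dphi Phi \<omega> t)) \<partial>samples UNIV)
      = (\<integral>\<^sup>+ \<omega>. ennreal (risk \<omega> t) \<partial>samples UNIV)"
    by (rule nn_integral_cong) (simp add: gen_err_iter[symmetric] iter_def)
  also have "\<dots> = ennreal (exp_risk t)"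
    unfolding exp_risk_def using risk_bounds[of _ UNIV t]
    by (intro nn_integral_eq_integral[OF integrable_risk] AE_I2) auto
  finally show ?thesis .
qed

lemma exp_gen_err_tendsto:
  "(\<lambda>t. \<integral>\<^sup>+ \<omega>. gen_err rho phi (eval_h Phi (ogd eta dphi Phi \<omega> t)) \<partial>samples UNIV)
     \<longlonglongrightarrow> gen_err rho phi (eval_h Phi fH)"
proof -
  have "excess_risk \<longlonglongrightarrow> 0"
    by (rule descent_recursion.tendsto_0[OF excess_risk_recursion])
  then have "(\<lambda>t. excess_risk t + risk_H) \<longlonglongrightarrow> 0 + risk_H"
    by (intro tendsto_add) auto
  then have "(\<lambda>t. ennreal (exp_risk t)) \<longlonglongrightarrow> ennreal risk_H"
    by (intro tendsto_ennrealI) (simp add: excess_risk_def)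
  then show ?thesis unfolding exp_gen_err_eq gen_err_H .
qed

end

theorem theorem1:
  fixes X :: "'x::euclidean_space set" and Y :: "real set"
    and rho :: "('x \<times> real) measure"
    and K :: "'x \<Rightarrow> 'x \<Rightarrow> real" and Phi :: "'x \<Rightarrow> 'h::{real_inner, complete_space}"
    and phi dphi :: "real \<Rightarrow> real \<Rightarrow> real"
    and eta :: "nat \<Rightarrow> real" and \<alpha> L :: real and fH :: 'h
  assumes rho_prob: "prob_space rho"
    and rho_sets: "sets rho = sets (restrict_space borel (X \<times> Y))"
    and K_cont: "continuous_on (X \<times> X) (\<lambda>(x, x'). K x x')"
    and K_feature: "\<And>x x'. x \<in> X \<Longrightarrow> x' \<in> X \<Longrightarrow> K x x' = inner (Phi x) (Phi x')"
    and H_is_RKHS: "closure (span (Phi ` X)) = UNIV"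
    and kappa_fin: "\<exists>\<kappa>. \<forall>x\<in>X. sqrt (K x x) \<le> \<kappa>"
    and phi_nonneg: "\<And>y s. y \<in> Y \<Longrightarrow> 0 \<le> phi y s"
    and phi_meas: "(\<lambda>(y, s). phi y s) \<in> borel_measurable borel"
    and phi_deriv: "\<And>y s. y \<in> Y \<Longrightarrow> (phi y has_real_derivative dphi y s) (at s)"
    and phi_convex: "\<And>y. y \<in> Y \<Longrightarrow> convex_on UNIV (phi y)"
    and alpha: "0 < \<alpha>" "\<alpha> \<le> 1" and L_pos: "0 < L"
    and holder: "\<And>y s s'. y \<in> Y \<Longrightarrow> \<bar>dphi y s - dphi y s'\<bar> \<le> L * \<bar>s - s'\<bar> powr \<alpha>"
    and fH_min: "\<And>g. gen_err rho phi (eval_h Phi fH) \<le> gen_err rho phi (eval_h Phi g)"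
    and bounded: "\<exists>B. (\<forall>y\<in>Y. phi y 0 \<le> B) \<and> (\<forall>x\<in>X. \<forall>y\<in>Y. phi y (eval_h Phi fH x) \<le> B)"
    and eta_pos: "\<And>t. 1 \<le> t \<Longrightarrow> 0 < eta t"
    and eta_div: "filterlim (\<lambda>n. \<Sum>t=1..n. eta t) at_top sequentially"
    and eta_lim: "(\<lambda>t. eta t powr \<alpha> * (\<Sum>k=1..t. (eta k)\<^sup>2)) \<longlonglongrightarrow> 0"
  shows "(\<lambda>t. \<integral>\<^sup>+ \<omega>. gen_err rho phi (eval_h Phi (ogd eta dphi Phi \<omega> t))
              \<partial>(PiM UNIV (\<lambda>_::nat. rho)))
         \<longlonglongrightarrow> gen_err rho phi (eval_h Phi fH)"
proof -
  obtain \<kappa> where \<kappa>: "\<And>x. x \<in> X \<Longrightarrow> sqrt (K x x) \<le> \<kappa>" using kappa_fin by blast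
  obtain B where B: "\<And>y. y \<in> Y \<Longrightarrow> phi y 0 \<le> B" "\<And>x y. x \<in> X \<Longrightarrow> y \<in> Y \<Longrightarrow> phi y (eval_h Phi fH x) \<le> B"
    using bounded by blast
  interpret kernel_ogd X Y rho K Phi phi dphi eta \<alpha> L fH B \<kappa>
    by (rule kernel_ogd.intro) (fact rho_prob rho_sets K_cont K_feature \<kappa> phi_nonneg phi_meas phi_deriv
        phi_convex alpha L_pos holder fH_min B eta_pos eta_div eta_lim)+
  show ?thesis by (rule exp_gen_err_tendsto)
qed

end
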